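(* Let $\Omega\subset\mathbb{R}^2$ be a bounded convex domain with $C^2$-smooth boundary of strictly positive curvature, normalized so that $\partial\Omega$ has length $1$, $0\in\Omega$ and $\omega_\Omega(0)=1$, and let $\gamma:[0,1]\to\mathbb{R}^2$ be an arc-length parametrization of $\partial\Omega$. Then there are constants $c,C>0$ such that $$c(1-r)^{3/2}\le\omega_{\frac12\Omega}(r\gamma(t))\le C(1-r)^{3/2},\qquad 0\le r<1,\ 0\le t<1.$$
   Context: $m$ is Lebesgue measure on $\mathbb{R}^2$, $\frac12\Omega=\{x/2:x\in\Omega\}$, and for bounded open convex $U$, $\omega_U(x)=m(U\cap(x-U))/\max_{y\in\mathbb{R}^2}m(U\cap(y-U))$. *)

theory Defs
  imports "HOL-Analysis.Analysis"
begin

definition covariogram :: "(real^2) set \<Rightarrow> real^2 \<Rightarrow> real" where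
  "covariogram U x = measure lebesgue (U \<inter> (\<lambda>y. x - y) ` U)"

text \<open>Normalized covariogram; the maximum over y is written as a supremum
  (it is attained for bounded open convex U).\<close>
definition omega :: "(real^2) set \<Rightarrow> real^2 \<Rightarrow> real" where
  "omega U x = covariogram U x / (SUP y. covariogram U y)"

definition half_set :: "(real^2) set \<Rightarrow> (real^2) set" where
  "half_set U = (\<lambda>x. (1/2) *\<^sub>R x) ` U"

end

theory Submission
  imports Defs
begin

text \<open>
  For \<open>x = (1 - s) \<gamma>(t)\<close> the covariogram of \<open>\<Omega>/2\<close> at \<open>x\<close> is a quarter of the area of
  \<open>\<Omega> \<inter> (2x - \<Omega>)\<close>.  This set lies in the slab between the tangent line of \<open>\<partial>\<Omega>\<close> at \<open>\<gamma>(t)\<close>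
  and its reflection through \<open>x\<close>, a slab of width \<open>h \<approx> s\<close>.  Since the curvature of \<open>\<partial>\<Omega>\<close>
  is bounded above and below, the part of \<open>\<Omega>\<close> within distance \<open>h\<close> of a tangent line is
  squeezed between two parabolas, so it has width \<open>\<approx> \<surd>h\<close> along the tangent.  Hence the
  intersection is comparable to an \<open>\<surd>h \<times> h\<close> rectangle, of area \<open>\<approx> s\<^sup>3\<^sup>/\<^sup>2\<close>, while the
  maximum of the covariogram is a fixed positive number.
\<close>

section \<open>Planar geometry and measure\<close>

definition rot90 :: "real^2 \<Rightarrow> real^2" where "rot90 x = vector [-(x$2), x$1]"

lemma rot90_nth [simp]: "rot90 x $ 1 = -(x$2)" "rot90 x $ 2 = x$1"
  by (simp_all add: rot90_def)

lemma inner_vec2: "(x::real^2) \<bullet> y = x$1*y$1 + x$2*y$2"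
  by (simp add: inner_vec_def sum_2)

lemma norm_vec2_squared: "(norm (x::real^2))^2 = (x$1)^2 + (x$2)^2"
  by (simp only: power2_norm_eq_inner inner_vec2) (simp add: power2_eq_square)

lemma rot90_inner_self [simp]: "rot90 x \<bullet> x = 0" "x \<bullet> rot90 x = 0"
  by (simp_all add: inner_vec2)

lemma norm_rot90 [simp]: "norm (rot90 x) = norm x"
proof -
  have "(norm (rot90 x))^2 = (norm x)^2" by (simp add: norm_vec2_squared)
  then show ?thesis by (simp add: power2_eq_iff_nonneg)
qed

lemma rot90_rot90 [simp]: "rot90 (rot90 x) = - x"
  and rot90_add [simp]: "rot90 (x + y) = rot90 x + rot90 y"
  and rot90_diff [simp]: "rot90 (x - y) = rot90 x - rot90 y"
  and rot90_scaleR [simp]: "rot90 (c *\<^sub>R x) = c *\<^sub>R rot90 x"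
  and rot90_minus [simp]: "rot90 (- x) = - rot90 x"
  by (simp_all add: vec_eq_iff forall_2)

lemma linear_rot90: "linear rot90"
  by (rule linearI) simp_all

lemma unit_frame_decomp:
  assumes "norm e = 1"
  shows "v = (v \<bullet> e) *\<^sub>R e + (v \<bullet> rot90 e) *\<^sub>R rot90 e"
proof -
  have "(e$1)^2 + (e$2)^2 = 1" using assms norm_vec2_squared[of e] by simp
  then show ?thesis
    unfolding vec_eq_iff forall_2
    by (simp add: inner_vec2, intro conjI; algebra)
qed

lemma measure_centered_box2:
  fixes a b :: real assumes "a \<ge> 0" "b \<ge> 0"
  shows "measure lebesgue (cbox (vector[-a,-b]) (vector[a,b]) :: (real^2) set) = 4*a*b"
proof -
  have "0 \<in> (cbox (vector[-a,-b]) (vector[a,b]) :: (real^2) set)"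
    using assms by (simp add: mem_box_cart forall_2)
  then have "cbox (vector[-a,-b]) (vector[a,b]) \<noteq> ({} :: (real^2) set)" by blast
  then show ?thesis
    by (simp add: measure_completion content_cbox_cart UNIV_2)
qed

lemma measure_frame_rectangle:
  fixes e n c :: "real^2"
  assumes orth: "e \<bullet> e = 1" "n \<bullet> n = 1" "e \<bullet> n = 0"
    and span: "\<And>v. v = (v \<bullet> e) *\<^sub>R e + (v \<bullet> n) *\<^sub>R n"
    and ab: "\<alpha> \<ge> 0" "\<beta> \<ge> 0"
  shows "{y. \<bar>(y - c) \<bullet> e\<bar> \<le> \<alpha> \<and> \<bar>(y - c) \<bullet> n\<bar> \<le> \<beta>} \<in> lmeasurable"
    and "measure lebesgue {y. \<bar>(y - c) \<bullet> e\<bar> \<le> \<alpha> \<and> \<bar>(y - c) \<bullet> n\<bar> \<le> \<beta>} = 4 * \<alpha> * \<beta>"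
proof -
  define L where "L = (\<lambda>x::real^2. x$1 *\<^sub>R e + x$2 *\<^sub>R n)"
  define B where "B = (cbox (vector[-\<alpha>,-\<beta>]) (vector[\<alpha>,\<beta>]) :: (real^2) set)"
  have lin: "linear L" unfolding L_def by (rule linearI) (simp_all add: algebra_simps)
  have "L v \<bullet> L w = v$1*w$1 + v$2*w$2" for v w
    using orth by (simp add: L_def inner_add_left inner_add_right inner_commute)
  then have orthL: "orthogonal_transformation L"
    by (simp add: orthogonal_transformation_def lin inner_vec2)
  have "n \<bullet> e = 0" using orth(3) by (simp add: inner_commute)
  then have Le: "L x \<bullet> e = x$1" "L x \<bullet> n = x$2" for x
    using orth by (simp_all add: L_def inner_add_left)
  have eq: "{y. \<bar>(y - c) \<bullet> e\<bar> \<le> \<alpha> \<and> \<bar>(y - c) \<bullet> n\<bar> \<le> \<beta>} = (+) c ` (L ` B)"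
  proof (intro set_eqI iffI)
    fix y assume y: "y \<in> {y. \<bar>(y - c) \<bullet> e\<bar> \<le> \<alpha> \<and> \<bar>(y - c) \<bullet> n\<bar> \<le> \<beta>}"
    define x where "x = (vector [(y - c) \<bullet> e, (y - c) \<bullet> n] :: real^2)"
    have "x \<in> B" using y by (auto simp: B_def x_def mem_box_cart forall_2)
    moreover have "y = c + L x" using span[of "y - c"] by (simp add: L_def x_def algebra_simps)
    ultimately show "y \<in> (+) c ` (L ` B)" by blast
  qed (auto simp: Le B_def mem_box_cart forall_2 abs_le_iff)
  have "compact (L ` B)"
    using lin by (intro compact_continuous_image linear_continuous_on) (auto simp: B_def linear_conv_bounded_linear)
  then show "{y. \<bar>(y - c) \<bullet> e\<bar> \<le> \<alpha> \<and> \<bar>(y - c) \<bullet> n\<bar> \<le> \<beta>} \<in> lmeasurable"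
    unfolding eq by (intro lmeasurable_compact compact_translation)
  have "measure lebesgue ((+) c ` (L ` B)) = measure lebesgue (L ` B)"
    by (rule measure_translation)
  also have "\<dots> = measure lebesgue B"
    by (rule measure_orthogonal_image[OF orthL]) (simp add: B_def)
  finally have "measure lebesgue ((+) c ` (L ` B)) = measure lebesgue B" .
  then show "measure lebesgue {y. \<bar>(y - c) \<bullet> e\<bar> \<le> \<alpha> \<and> \<bar>(y - c) \<bullet> n\<bar> \<le> \<beta>} = 4 * \<alpha> * \<beta>"
    using eq measure_centered_box2[OF ab] by (simp add: B_def)
qed

definition central_section :: "(real^2) set \<Rightarrow> real^2 \<Rightarrow> (real^2) set" where
  "central_section U c = {z. z \<in> U \<and> 2 *\<^sub>R c - z \<in> U}"

lemma covariogram_half_set: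
  "covariogram (half_set U) x = measure lebesgue (central_section U x) / 4"
proof -
  have eq: "half_set U \<inter> (\<lambda>y. x - y) ` half_set U = (\<lambda>z. (1/2) *\<^sub>R z + 0) ` central_section U x"
  proof (intro set_eqI iffI)
    fix y assume "y \<in> half_set U \<inter> (\<lambda>y. x - y) ` half_set U"
    then obtain z w where "z \<in> U" "y = (1/2) *\<^sub>R z" "w \<in> U" "y = x - (1/2) *\<^sub>R w"
      by (auto simp: half_set_def)
    moreover from this have "2 *\<^sub>R x - z = w" by (simp add: algebra_simps)
    ultimately show "y \<in> (\<lambda>z. (1/2) *\<^sub>R z + 0) ` central_section U x"
      by (auto simp: central_section_def)
  next
    fix y assume "y \<in> (\<lambda>z. (1/2) *\<^sub>R z + 0) ` central_section U x"
    then obtain z where z: "z \<in> U" "2 *\<^sub>R x - z \<in> U" "y = (1/2) *\<^sub>R z"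
      by (auto simp: central_section_def)
    have "y = x - (1/2) *\<^sub>R (2 *\<^sub>R x - z)" using z(3) by (simp add: algebra_simps)
    then show "y \<in> half_set U \<inter> (\<lambda>y. x - y) ` half_set U"
      using z unfolding half_set_def by blast
  qed
  show ?thesis
    unfolding covariogram_def eq measure_lebesgue_affine by (simp add: power2_eq_square)
qed

lemma lmeasurable_central_section:
  assumes "open U" "bounded U"
  shows "central_section U c \<in> lmeasurable"
proof -
  have "central_section U c = U \<inter> (\<lambda>z. 2 *\<^sub>R c - z) -` U" by (auto simp: central_section_def)
  moreover have "open ((\<lambda>z. 2 *\<^sub>R c - z) -` U)"
    by (rule continuous_open_vimage[OF assms(1)]) (intro continuous_intros)
  ultimately have "open (central_section U c)" using assms(1) by auto
  moreover have "bounded (central_section U c)"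
    using assms(2) by (rule bounded_subset) (auto simp: central_section_def)
  ultimately show ?thesis by (simp add: lmeasurable_open)
qed

lemma measure_central_section_le:
  assumes "open U" "bounded U"
  shows "measure lebesgue (central_section U c) \<le> measure lebesgue U"
  using assms
  by (intro measure_mono_fmeasurable[OF _ fmeasurableD[OF lmeasurable_central_section]])
    (auto simp: central_section_def lmeasurable_open)

lemma continuous_nonzero_same_sign:
  fixes k :: "real \<Rightarrow> real"
  assumes "continuous_on UNIV k" "\<And>s. k s \<noteq> 0"
  shows "k s * k 0 > 0"
proof (rule ccontr)
  assume a: "\<not> k s * k 0 > 0"
  have c: "connected (range k)"
    using assms(1) connected_UNIV connected_continuous_image by blast
  have "0 \<in> range k"
  proof (cases "k s \<le> k 0")
    case True
    then have "k s \<le> 0" "0 \<le> k 0" using a by (auto simp: zero_less_mult_iff)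
    then show ?thesis using connectedD_interval[OF c, of "k s" "k 0" 0] by auto
  next
    case False
    then have "k 0 \<le> 0" "0 \<le> k s" using a by (auto simp: zero_less_mult_iff)
    then show ?thesis using connectedD_interval[OF c, of "k 0" "k s" 0] by auto
  qed
  then show False using assms(2) by auto
qed

lemma powr_three_halves:
  fixes s :: real assumes "s \<ge> 0"
  shows "s powr (3/2) = s * sqrt s"
proof -
  have "s powr (3/2) = s powr (1 + 1/2)" by simp
  also have "\<dots> = s powr 1 * s powr (1/2)" by (rule powr_add)
  also have "\<dots> = s * sqrt s" using assms by (simp add: powr_half_sqrt)
  finally show ?thesis .
qed

lemma square_le_shifted_squares:
  fixes u x :: real
  shows "u^2 \<le> 2 * (u - x)^2 + 2 * x^2" "\<bar>u * x\<bar> \<le> (u - x)^2 / 2 + 3 * x^2 / 2"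
proof -
  have "2 * (u - x)^2 + 2 * x^2 - u^2 = (u - 2*x)^2"
    by (simp add: power2_eq_square algebra_simps)
  then show "u^2 \<le> 2 * (u - x)^2 + 2 * x^2" by (metis diff_ge_0_iff_ge zero_le_power2)
  have "(u - x)^2 / 2 + 3 * x^2 / 2 - u * x = (u - 2*x)^2 / 2"
    and "(u - x)^2 / 2 + 3 * x^2 / 2 + u * x = u^2 / 2 + 2 * x^2"
    by (simp_all add: power2_eq_square field_simps)
  moreover have "0 \<le> (u - 2*x)^2 / 2" "0 \<le> u^2 / 2 + 2 * x^2" by simp_all
  ultimately show "\<bar>u * x\<bar> \<le> (u - x)^2 / 2 + 3 * x^2 / 2" by linarith
qed

text \<open>Since \<open>u\<^sup>2 \<kappa>/2 - u \<kappa> x = \<kappa>/2 ((u - x)\<^sup>2 - x\<^sup>2)\<close>, the error terms are absorbed by the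
  \<open>(u - x)\<^sup>2\<close> part and by \<open>z\<close>, which dominates \<open>x\<^sup>2\<close>.\<close>

lemma perturbed_parabola_nonneg:
  fixes \<kappa> k0 k1 \<epsilon> u x z V :: real
  assumes k: "0 < k0" "k0 \<le> \<kappa>" "\<kappa> \<le> k1" and e: "0 < \<epsilon>" "\<epsilon> \<le> 1/2" "\<epsilon> * (13 + 6*k1) \<le> k0"
    and u: "\<bar>u\<bar> \<le> 1" and z: "z \<ge> (15 + 7*k1) * x^2"
    and V: "\<bar>V - (z + u^2 * \<kappa> / 2 - u * \<kappa> * x)\<bar> \<le> \<epsilon> * u^2 * (1 + k1) + \<epsilon> * \<bar>u\<bar> * (\<bar>x\<bar> + \<bar>z\<bar> + \<bar>u\<bar> * (2 + k1/2))"
  shows "V \<ge> 0"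
proof -
  define A where "A = (u - x)^2"
  define X where "X = x^2"
  define c where "c = 3 + 3 * k1 / 2"
  have k1: "k1 > 0" using k by linarith
  have A0: "A \<ge> 0" and X0: "X \<ge> 0" by (simp_all add: A_def X_def)
  have "(15 + 7*k1) * x^2 \<ge> 0" using k1 by simp
  then have z0: "z \<ge> 0" using z by linarith
  have c0: "c \<ge> 0" using k1 by (simp add: c_def)
  define E where "E = \<epsilon> * u^2 * (1 + k1) + \<epsilon> * \<bar>u\<bar> * (\<bar>x\<bar> + \<bar>z\<bar> + \<bar>u\<bar> * (2 + k1/2))"
  have V_lower: "V \<ge> z + (\<kappa>/2) * A - (\<kappa>/2) * X - E"
  proof -
    have "u^2 * \<kappa> / 2 - u * \<kappa> * x = (\<kappa>/2) * A - (\<kappa>/2) * X"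
      by (simp add: A_def X_def power2_eq_square algebra_simps)
    then show ?thesis using V unfolding E_def by linarith
  qed
  have E_eq: "E = c * (\<epsilon> * u^2) + \<epsilon> * \<bar>u * x\<bar> + (\<epsilon> * \<bar>u\<bar>) * z"
    using z0 by (simp add: E_def c_def abs_mult power2_eq_square algebra_simps)
  have usq: "u^2 \<le> 2 * A + 2 * X" and ux: "\<bar>u * x\<bar> \<le> A/2 + 3 * X / 2"
    using square_le_shifted_squares[of u x] by (simp_all add: A_def X_def)
  have z_err: "(\<epsilon> * \<bar>u\<bar>) * z \<le> z / 2"
  proof -
    have "\<epsilon> * \<bar>u\<bar> \<le> 1/2 * 1" by (rule mult_mono) (use e u in auto)
    then show ?thesis using mult_right_mono[OF _ z0, of "\<epsilon> * \<bar>u\<bar>" "1/2"] by simp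
  qed
  have usq_err: "c * (\<epsilon> * u^2) \<le> c * (\<epsilon> * (2 * A + 2 * X))"
    using usq c0 e by (simp add: mult_left_mono)
  have ux_err: "\<epsilon> * \<bar>u * x\<bar> \<le> \<epsilon> * (A/2 + 3 * X / 2)"
    using ux e by (simp add: mult_left_mono)
  have err_sum: "c * (\<epsilon> * (2 * A + 2 * X)) + \<epsilon> * (A/2 + 3 * X / 2) = (\<epsilon> * (13 + 6*k1) / 2) * A + (\<epsilon> * (2 * c + 3/2)) * X"
    by (simp add: c_def algebra_simps)
  have A_part: "(\<epsilon> * (13 + 6*k1) / 2) * A \<le> (\<kappa>/2) * A"
    by (rule mult_right_mono) (use e k A0 in auto)
  have X_part: "(\<epsilon> * (2 * c + 3/2)) * X \<le> ((2 * c + 3/2) / 2) * X"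
    by (rule mult_right_mono) (use e c0 X0 in \<open>auto simp: mult_right_mono\<close>)
  have z_dominates: "(\<kappa>/2) * X + ((2 * c + 3/2) / 2) * X \<le> z / 2"
  proof -
    have "(\<kappa>/2) * X + ((2 * c + 3/2) / 2) * X = (\<kappa>/2 + (2 * c + 3/2) / 2) * X" by (simp add: algebra_simps)
    also have "\<dots> \<le> ((15 + 7*k1)/2) * X"
    proof (rule mult_right_mono)
      show "\<kappa> / 2 + (2 * c + 3 / 2) / 2 \<le> (15 + 7 * k1) / 2" using k k1 unfolding c_def by (simp add: field_simps)
    qed (rule X0)
    also have "\<dots> \<le> z / 2" using z by (simp add: X_def)
    finally show ?thesis .
  qed
  show ?thesis using V_lower E_eq z_err usq_err ux_err err_sum A_part X_part z_dominates by linarith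
qed


lemma perturbed_parabola_width:
  fixes \<kappa> k0 k1 \<epsilon> r u x z V :: real
  assumes k: "0 < k0" "k0 \<le> \<kappa>" "\<kappa> \<le> k1" and e: "0 < \<epsilon>" "\<epsilon> \<le> k0/2" "\<epsilon> \<le> 1"
    and r: "0 < r" "r \<le> 1" and u: "\<bar>u\<bar> = r" "u * x = r * \<bar>x\<bar>"
    and z: "0 \<le> z" "z \<le> r^2" and V0: "0 \<le> V"
    and V: "\<bar>V - (z + u^2 * \<kappa> / 2 - u * \<kappa> * x)\<bar> \<le> \<epsilon> * u^2 * (1 + k1) + \<epsilon> * \<bar>u\<bar> * (\<bar>x\<bar> + \<bar>z\<bar> + \<bar>u\<bar> * (2 + k1/2))"
  shows "\<bar>x\<bar> \<le> 2 * (5 + 2 * k1) / k0 * r"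
proof -
  define h where "h = r^2"
  have u2: "u^2 = h" using u(1) power2_abs[of u] by (simp add: h_def)
  have k1: "k1 > 0" using k by linarith
  have eh: "\<epsilon> * h \<le> h" using e by (simp add: h_def mult_left_le_one_le)
  have sq_err: "\<epsilon> * u^2 * (1 + k1) \<le> h * (1 + k1)"
    using mult_right_mono[OF eh, of "1 + k1"] u2 k1 by simp
  have lin_err_eq: "\<epsilon> * \<bar>u\<bar> * (\<bar>x\<bar> + \<bar>z\<bar> + \<bar>u\<bar> * (2 + k1/2)) = \<epsilon> * (r * \<bar>x\<bar>) + (\<epsilon> * r) * z + \<epsilon> * h * (2 + k1/2)"
    using u(1) z(1) by (simp add: h_def power2_eq_square algebra_simps)
  have z_err: "(\<epsilon> * r) * z \<le> z"
    using mult_right_mono[OF mult_mono[of \<epsilon> 1 r 1] z(1)] e r by simp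
  have const_err: "\<epsilon> * h * (2 + k1/2) \<le> h * (2 + k1/2)"
    using mult_right_mono[OF eh, of "2 + k1/2"] k1 by simp
  have curv_term: "u^2 * \<kappa> / 2 \<le> h * k1 / 2" using u2 k by (simp add: h_def mult_left_mono)
  have ux: "u * \<kappa> * x = \<kappa> * (r * \<bar>x\<bar>)" by (simp add: u(2)[symmetric] mult_ac)
  have "\<kappa> * (r * \<bar>x\<bar>) \<le> z + u^2 * \<kappa> / 2 + \<epsilon> * u^2 * (1 + k1) + \<epsilon> * \<bar>u\<bar> * (\<bar>x\<bar> + \<bar>z\<bar> + \<bar>u\<bar> * (2 + k1/2))"
    using V V0 ux by linarith
  also have "\<dots> \<le> h * (5 + 2 * k1) + \<epsilon> * (r * \<bar>x\<bar>)"
    using sq_err lin_err_eq z_err const_err curv_term z by (simp add: h_def algebra_simps)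
  also have "h * (5 + 2 * k1) = r * (r * (5 + 2 * k1))" by (simp add: h_def power2_eq_square)
  finally have "(\<kappa> - \<epsilon>) * (r * \<bar>x\<bar>) \<le> r * (r * (5 + 2 * k1))"
    by (simp add: left_diff_distrib)
  moreover have "(k0/2) * (r * \<bar>x\<bar>) \<le> (\<kappa> - \<epsilon>) * (r * \<bar>x\<bar>)"
    by (rule mult_right_mono) (use k e r in auto)
  ultimately have "r * ((k0/2) * \<bar>x\<bar>) \<le> r * (r * (5 + 2 * k1))"
    by (simp add: mult.left_commute)
  then have "(k0/2) * \<bar>x\<bar> \<le> r * (5 + 2 * k1)"
    using r(1) by (rule mult_left_le_imp_le)
  then show ?thesis using k(1) by (simp add: field_simps)
qed

lemma first_order_remainder_bound:
  fixes f :: "real \<Rightarrow> 'a::real_normed_vector"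
  assumes der: "\<And>x. x \<in> {min t (t+u)..max t (t+u)} \<Longrightarrow> (f has_vector_derivative f' x) (at x)"
    and bnd: "\<And>x. x \<in> {min t (t+u)..max t (t+u)} \<Longrightarrow> norm (f' x - f' t) \<le> B"
  shows "norm (f (t+u) - f t - u *\<^sub>R f' t) \<le> B * \<bar>u\<bar>"
proof -
  let ?S = "{min t (t+u)..max t (t+u)}"
  let ?g = "\<lambda>v. f v - v *\<^sub>R f' t"
  have "(?g has_derivative (\<lambda>h. h *\<^sub>R (f' x - f' t))) (at x within ?S)" if "x \<in> ?S" for x
  proof -
    have "(f has_vector_derivative f' x) (at x within ?S)"
      using der[OF that] by (rule has_vector_derivative_at_within)
    moreover have "((\<lambda>v. v *\<^sub>R f' t) has_vector_derivative f' t) (at x within ?S)"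
      unfolding has_vector_derivative_def
      by (rule bounded_linear_imp_has_derivative[OF bounded_linear_scaleR_left])
    ultimately have "(?g has_vector_derivative (f' x - f' t)) (at x within ?S)"
      by (rule has_vector_derivative_diff)
    then show ?thesis by (simp add: has_vector_derivative_def)
  qed
  moreover have "onorm (\<lambda>h. h *\<^sub>R (f' x - f' t)) \<le> B" if "x \<in> ?S" for x
    using bnd[OF that] by (simp add: onorm_scaleR_left[OF bounded_linear_ident] onorm_id)
  ultimately have "norm (?g (t+u) - ?g t) \<le> B * norm ((t+u) - t)"
    by (rule differentiable_bound[OF convex_real_interval(5)]) auto
  then show ?thesis by (simp add: algebra_simps)
qed

lemma convex_shrink_ball_subset:
  fixes U :: "'a::euclidean_space set"
  assumes "convex U" "open U" and q: "q \<in> closure U" and s: "0 < s" "s \<le> 1"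
    and b: "ball 0 \<beta> \<subseteq> U"
  shows "ball ((1 - s) *\<^sub>R q) (s * \<beta>) \<subseteq> U"
proof
  fix y assume y: "y \<in> ball ((1 - s) *\<^sub>R q) (s * \<beta>)"
  define w where "w = (1/s) *\<^sub>R (y - (1 - s) *\<^sub>R q)"
  have "norm w < \<beta>"
    using y s by (simp add: w_def dist_norm norm_minus_commute pos_divide_less_eq mult.commute)
  then have "w \<in> interior U" using b assms(2) by (auto simp: interior_open)
  then have "q - s *\<^sub>R (q - w) \<in> interior U"
    by (rule mem_interior_closure_convex_shrink[OF assms(1) _ q s])
  moreover have "q - s *\<^sub>R (q - w) = y" using s by (simp add: w_def algebra_simps)
  ultimately show "y \<in> U" using assms(2) by (simp add: interior_open)
qed

section \<open>The Frenet frame of the boundary curve\<close>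

locale smooth_strictly_convex_domain =
  fixes \<Omega> :: "(real^2) set" and \<gamma> :: "real \<Rightarrow> real^2"
  assumes open_\<Omega>: "open \<Omega>" and conv: "convex \<Omega>" and bdd: "bounded \<Omega>"
    and zero_in: "0 \<in> \<Omega>"
    and periodic: "\<And>t. \<gamma> (t + 1) = \<gamma> t"
    and inj: "inj_on \<gamma> {0..<1}"
    and image: "\<gamma> ` {0..1} = frontier \<Omega>"
    and diff1: "\<And>t. \<gamma> differentiable (at t)"
    and diff2: "\<And>t. (\<lambda>s. vector_derivative \<gamma> (at s)) differentiable (at t)"
    and cont2: "continuous_on UNIV
       (\<lambda>t. vector_derivative (\<lambda>s. vector_derivative \<gamma> (at s)) (at t))"
    and arclen: "\<And>t. norm (vector_derivative \<gamma> (at t)) = 1"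
    and curv: "\<And>t. norm (vector_derivative (\<lambda>s. vector_derivative \<gamma> (at s)) (at t)) > 0"
begin

definition tangent where "tangent s = vector_derivative \<gamma> (at s)"
definition dtangent where "dtangent s = vector_derivative tangent (at s)"
definition \<kappa> where "\<kappa> s = norm (dtangent s)"

lemma tangent_eq: "tangent = (\<lambda>s. vector_derivative \<gamma> (at s))"
  by (rule ext) (simp add: tangent_def)

lemma norm_tangent [simp]: "norm (tangent s) = 1"
  using arclen by (simp add: tangent_def)

lemma curvature_pos: "\<kappa> s > 0"
  using curv by (simp add: \<kappa>_def dtangent_def tangent_eq)

lemma gamma_has_tangent: "(\<gamma> has_vector_derivative tangent s) (at s)"
  using diff1[of s] vector_derivative_works unfolding tangent_def by blast

lemma tangent_has_dtangent: "(tangent has_vector_derivative dtangent s) (at s)"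
  using diff2[of s] vector_derivative_works unfolding dtangent_def tangent_eq by blast

lemma continuous_on_dtangent: "continuous_on UNIV dtangent"
  using cont2 by (simp add: dtangent_def tangent_eq)

lemma continuous_on_tangent: "continuous_on UNIV tangent"
  by (meson continuous_at_imp_continuous_on tangent_has_dtangent has_vector_derivative_continuous)

lemma continuous_on_gamma: "continuous_on UNIV \<gamma>"
  by (meson continuous_at_imp_continuous_on gamma_has_tangent has_vector_derivative_continuous)

lemma continuous_on_curvature: "continuous_on UNIV \<kappa>"
  unfolding \<kappa>_def by (intro continuous_on_norm continuous_on_dtangent)

lemma tangent_orthogonal_dtangent: "tangent s \<bullet> dtangent s = 0"
proof -
  have has_deriv: "((\<lambda>x. tangent x \<bullet> tangent x) has_derivative
      (\<lambda>h. tangent s \<bullet> (h *\<^sub>R dtangent s) + (h *\<^sub>R dtangent s) \<bullet> tangent s)) (at s)"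
    using tangent_has_dtangent[of s, unfolded has_vector_derivative_def]
    by (intro has_derivative_inner) auto
  have "(\<lambda>x. tangent x \<bullet> tangent x) = (\<lambda>x. 1)"
    by (rule ext) (simp add: power2_norm_eq_inner[symmetric])
  then have has_zero_deriv: "((\<lambda>x. tangent x \<bullet> tangent x) has_derivative (\<lambda>h. 0)) (at s)" by simp
  have "(\<lambda>h. tangent s \<bullet> (h *\<^sub>R dtangent s) + (h *\<^sub>R dtangent s) \<bullet> tangent s) = (\<lambda>h. 0)"
    using has_derivative_unique[OF has_deriv has_zero_deriv] .
  then have "tangent s \<bullet> (1 *\<^sub>R dtangent s) + (1 *\<^sub>R dtangent s) \<bullet> tangent s = 0" by metis
  then show ?thesis by (simp add: inner_commute)
qed

definition signed_curvature where "signed_curvature s = dtangent s \<bullet> rot90 (tangent s)"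

text \<open>The curvature never vanishes, so its sign is constant and the rotated tangent can be
  oriented once and for all towards the centre of curvature.\<close>

definition orientation where "orientation = sgn (signed_curvature 0)"

definition normal where "normal s = orientation *\<^sub>R rot90 (tangent s)"

lemma dtangent_eq_signed_curvature: "dtangent s = signed_curvature s *\<^sub>R rot90 (tangent s)"
  using unit_frame_decomp[OF norm_tangent[of s], of "dtangent s"] tangent_orthogonal_dtangent[of s]
  by (simp add: signed_curvature_def inner_commute)

lemma abs_signed_curvature: "\<bar>signed_curvature s\<bar> = \<kappa> s"
  using dtangent_eq_signed_curvature[of s] by (simp add: \<kappa>_def)

lemma signed_curvature_same_sign: "signed_curvature s * signed_curvature 0 > 0"
proof (rule continuous_nonzero_same_sign)
  show "continuous_on UNIV signed_curvature"
    unfolding signed_curvature_def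
    by (intro continuous_on_inner continuous_on_dtangent
        linear_continuous_on_compose[OF continuous_on_tangent] linear_rot90)
  show "signed_curvature s \<noteq> 0" for s
    using abs_signed_curvature[of s] curvature_pos[of s] by auto
qed

lemma abs_orientation [simp]: "\<bar>orientation\<bar> = 1"
  using signed_curvature_same_sign[of 0] by (auto simp: orientation_def sgn_if)

lemma orientation_squared [simp]: "orientation * orientation = 1"
  using abs_orientation abs_mult_self_eq[of orientation] by simp

lemma signed_curvature_eq: "signed_curvature s = orientation * \<kappa> s"
  using signed_curvature_same_sign[of s] abs_signed_curvature[of s]
  by (auto simp: orientation_def sgn_if zero_less_mult_iff)

lemma dtangent_eq: "dtangent s = \<kappa> s *\<^sub>R normal s"
  by (simp add: dtangent_eq_signed_curvature signed_curvature_eq normal_def)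

lemma norm_normal [simp]: "norm (normal s) = 1"
  by (simp add: normal_def)

lemma normal_orthogonal_tangent [simp]: "normal s \<bullet> tangent s = 0" "tangent s \<bullet> normal s = 0"
  by (simp_all add: normal_def)

lemma frame_orthonormal [simp]: "tangent s \<bullet> tangent s = 1" "normal s \<bullet> normal s = 1" "tangent s \<bullet> normal s = 0"
  by (simp_all add: norm_eq_1[symmetric])

lemma frame_decomp: "v = (v \<bullet> tangent s) *\<^sub>R tangent s + (v \<bullet> normal s) *\<^sub>R normal s"
proof -
  have "v = (v \<bullet> tangent s) *\<^sub>R tangent s + (v \<bullet> rot90 (tangent s)) *\<^sub>R rot90 (tangent s)"
    by (rule unit_frame_decomp) simp
  also have "(v \<bullet> rot90 (tangent s)) *\<^sub>R rot90 (tangent s) = (v \<bullet> normal s) *\<^sub>R normal s"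
    by (simp add: normal_def scaleR_scaleR mult.assoc[symmetric])
  finally show ?thesis .
qed

lemma norm_le_frame_coords: "norm v \<le> \<bar>v \<bullet> tangent s\<bar> + \<bar>v \<bullet> normal s\<bar>"
  using norm_triangle_ineq[of "(v \<bullet> tangent s) *\<^sub>R tangent s" "(v \<bullet> normal s) *\<^sub>R normal s"]
  by (simp flip: frame_decomp)

lemma normal_coordinate_eq: "a \<bullet> tangent s = 0 \<Longrightarrow> a = (a \<bullet> normal s) *\<^sub>R normal s"
  using frame_decomp[of a s] by simp

text \<open>Differentiating \<open>normal = orientation \<cdot> rot90 tangent\<close> gives \<open>normal' = -\<kappa> tangent\<close>.\<close>

lemma normal_taylor_eq:
  "norm (normal (t+u) - normal t + (u * \<kappa> t) *\<^sub>R tangent t)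
   = norm (tangent (t+u) - tangent t - u *\<^sub>R dtangent t)"
proof -
  have "orientation *\<^sub>R rot90 (u *\<^sub>R dtangent t) = (u * \<kappa> t) *\<^sub>R (orientation *\<^sub>R rot90 (normal t))"
    by (simp add: dtangent_eq scaleR_scaleR mult.commute mult.left_commute)
  also have "\<dots> = - (u * \<kappa> t) *\<^sub>R tangent t"
    by (simp add: normal_def scaleR_scaleR)
  finally have "normal (t+u) - normal t + (u * \<kappa> t) *\<^sub>R tangent t
      = orientation *\<^sub>R rot90 (tangent (t+u) - tangent t - u *\<^sub>R dtangent t)"
    by (simp add: normal_def algebra_simps)
  then show ?thesis by (metis norm_rot90 norm_scaleR abs_orientation mult_1)
qed

lemma gamma_add_of_nat: "\<gamma> (s + real n) = \<gamma> s"
proof (induction n)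
  case (Suc n)
  have "\<gamma> (s + real (Suc n)) = \<gamma> ((s + real n) + 1)" by (simp add: algebra_simps)
  then show ?case using periodic[of "s + real n"] Suc by simp
qed simp

lemma gamma_add_of_int: "\<gamma> (s + of_int k) = \<gamma> s"
proof (cases "k \<ge> 0")
  case True
  then show ?thesis using gamma_add_of_nat[of s "nat k"] by simp
next
  case False
  then show ?thesis using gamma_add_of_nat[of "s + of_int k" "nat (-k)"] by simp
qed

lemma gamma_frac: "\<gamma> s = \<gamma> (frac s)"
  using gamma_add_of_int[of s "- \<lfloor>s\<rfloor>"] by (simp add: frac_def)

lemma frac_in_unit_interval: "frac x \<in> {0..<1}"
  by (simp add: frac_lt_1)

lemma gamma_in_frontier: "\<gamma> s \<in> frontier \<Omega>"
proof -
  have "frac s \<in> {0..1}" using frac_in_unit_interval[of s] by simp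
  then show ?thesis using image gamma_frac[of s] by blast
qed

lemma gamma_in_closure: "\<gamma> s \<in> closure \<Omega>"
  using gamma_in_frontier frontier_def by blast

lemma gamma_notin: "\<gamma> s \<notin> \<Omega>"
  using gamma_in_frontier open_\<Omega> by (simp add: frontier_def interior_open)

lemma gamma_eq_imp_int_diff:
  assumes "\<gamma> x = \<gamma> y" shows "\<exists>k::int. x - y = of_int k"
proof -
  have "\<gamma> (frac x) = \<gamma> (frac y)" using assms gamma_frac by metis
  then have "frac x = frac y" by (rule inj_onD[OF inj _ frac_in_unit_interval frac_in_unit_interval])
  then have "x - y = of_int (\<lfloor>x\<rfloor> - \<lfloor>y\<rfloor>)" by (simp add: frac_def)
  then show ?thesis by blast
qed

lemma closure_bounded: obtains M where "M > 0" "\<And>y. y \<in> closure \<Omega> \<Longrightarrow> norm y \<le> M"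
  using bounded_closure[OF bdd] unfolding bounded_pos by blast

lemma curvature_bounds:
  obtains k0 k1 where "k0 > 0" "\<And>s. s \<in> {-3..4} \<Longrightarrow> k0 \<le> \<kappa> s \<and> \<kappa> s \<le> k1"
proof -
  have c: "continuous_on {-3..4::real} \<kappa>" using continuous_on_curvature continuous_on_subset by blast
  obtain a where a: "a \<in> {-3..4::real}" "\<forall>y\<in>{-3..4}. \<kappa> a \<le> \<kappa> y"
    using continuous_attains_inf[OF compact_Icc _ c] by auto
  obtain b where b: "b \<in> {-3..4::real}" "\<forall>y\<in>{-3..4}. \<kappa> y \<le> \<kappa> b"
    using continuous_attains_sup[OF compact_Icc _ c] by auto
  show ?thesis using a b curvature_pos[of a] by (intro that[of "\<kappa> a" "\<kappa> b"]) auto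
qed

text \<open>All parameters used below lie within one period of \<open>[0,1]\<close>, and all steps have length
  at most \<open>1\<close>; the interval \<open>[-3,4]\<close> covers every point that occurs.\<close>

lemma taylor_uniform:
  assumes "\<epsilon> > 0"
  obtains \<delta> where "\<delta> > 0"
    "\<And>t u. t \<in> {-3..4} \<Longrightarrow> t + u \<in> {-3..4} \<Longrightarrow> \<bar>u\<bar> < \<delta> \<Longrightarrow>
        norm (tangent (t+u) - tangent t - u *\<^sub>R dtangent t) \<le> \<epsilon> * \<bar>u\<bar>"
    "\<And>t u. t \<in> {-3..4} \<Longrightarrow> t + u \<in> {-3..4} \<Longrightarrow> \<bar>u\<bar> < \<delta> \<Longrightarrow>
        norm (\<gamma> (t+u) - \<gamma> t - u *\<^sub>R tangent t - (u^2/2) *\<^sub>R dtangent t) \<le> \<epsilon> * u^2"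
proof -
  let ?I = "{-3..4::real}"
  have "uniformly_continuous_on ?I dtangent"
    by (intro compact_uniformly_continuous continuous_on_subset[OF continuous_on_dtangent]) auto
  then obtain \<delta> where \<delta>: "\<delta> > 0"
    "\<And>x x'. x \<in> ?I \<Longrightarrow> x' \<in> ?I \<Longrightarrow> dist x' x < \<delta> \<Longrightarrow> dist (dtangent x') (dtangent x) < \<epsilon>"
    unfolding uniformly_continuous_on_def using assms by metis
  have seg: "{min t (t+u) .. max t (t+u)} \<subseteq> ?I" if "t \<in> ?I" "t + u \<in> ?I" for t u
    using that by auto
  have tangent_rem: "norm (tangent (t+u) - tangent t - u *\<^sub>R dtangent t) \<le> \<epsilon> * \<bar>u\<bar>"
    if tu: "t \<in> ?I" "t + u \<in> ?I" "\<bar>u\<bar> < \<delta>" for t u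
  proof (rule first_order_remainder_bound[where f = tangent, OF tangent_has_dtangent])
    fix x assume "x \<in> {min t (t+u)..max t (t+u)}"
    with seg[OF tu(1,2)] tu(3) have "x \<in> ?I" "dist x t < \<delta>" by (auto simp: dist_real_def)
    then have "dist (dtangent x) (dtangent t) < \<epsilon>" using \<delta>(2) tu(1) by blast
    then show "norm (dtangent x - dtangent t) \<le> \<epsilon>" by (simp add: dist_norm)
  qed
  have gamma_rem: "norm (\<gamma> (t+u) - \<gamma> t - u *\<^sub>R tangent t - (u^2/2) *\<^sub>R dtangent t) \<le> \<epsilon> * u^2"
    if tu: "t \<in> ?I" "t + u \<in> ?I" "\<bar>u\<bar> < \<delta>" for t u
  proof -
    let ?f = "\<lambda>v. \<gamma> v - ((v - t)^2/2) *\<^sub>R dtangent t"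
    let ?f' = "\<lambda>v. tangent v - (v - t) *\<^sub>R dtangent t"
    have "norm (?f (t+u) - ?f t - u *\<^sub>R ?f' t) \<le> (\<epsilon> * \<bar>u\<bar>) * \<bar>u\<bar>"
    proof (rule first_order_remainder_bound[where f = ?f and f' = ?f'])
      fix x
      have "((\<lambda>v. ((v - t)^2/2) *\<^sub>R dtangent t) has_vector_derivative (x - t) *\<^sub>R dtangent t) (at x)"
        by (auto intro!: derivative_eq_intros)
      then show "(?f has_vector_derivative ?f' x) (at x)"
        by (intro has_vector_derivative_diff gamma_has_tangent)
    next
      fix x assume x: "x \<in> {min t (t+u)..max t (t+u)}"
      with seg[OF tu(1,2)] have xI: "x \<in> ?I" and xt: "\<bar>x - t\<bar> \<le> \<bar>u\<bar>" by auto
      have "norm (tangent (t + (x - t)) - tangent t - (x - t) *\<^sub>R dtangent t) \<le> \<epsilon> * \<bar>x - t\<bar>"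
        using tangent_rem[of t "x - t"] tu xI xt by simp
      also have "\<dots> \<le> \<epsilon> * \<bar>u\<bar>" using mult_left_mono[OF xt] assms by simp
      finally have "norm (tangent (t + (x - t)) - tangent t - (x - t) *\<^sub>R dtangent t) \<le> \<epsilon> * \<bar>u\<bar>" .
      then show "norm (?f' x - ?f' t) \<le> \<epsilon> * \<bar>u\<bar>" by (simp add: algebra_simps)
    qed
    moreover have "?f (t+u) - ?f t - u *\<^sub>R ?f' t
        = \<gamma> (t+u) - \<gamma> t - u *\<^sub>R tangent t - (u^2/2) *\<^sub>R dtangent t"
      by simp
    moreover have "(\<epsilon> * \<bar>u\<bar>) * \<bar>u\<bar> = \<epsilon> * u^2"
      by (metis abs_mult_self_eq mult.assoc power2_eq_square)
    ultimately show ?thesis by (simp only:)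
  qed
  from \<delta>(1) tangent_rem gamma_rem show ?thesis by (rule that)
qed

section \<open>Supporting lines\<close>

lemma supporting_functional_orthogonal_tangent:
  assumes sup: "\<And>y. y \<in> closure \<Omega> \<Longrightarrow> a \<bullet> y \<le> a \<bullet> \<gamma> s"
  shows "a \<bullet> tangent s = 0"
proof -
  have "((\<lambda>x. a \<bullet> \<gamma> x) has_derivative (\<lambda>h. a \<bullet> (h *\<^sub>R tangent s))) (at s)"
    using gamma_has_tangent[of s] unfolding has_vector_derivative_def by (rule has_derivative_inner_right)
  moreover have "(\<lambda>h. a \<bullet> (h *\<^sub>R tangent s)) = (*) (a \<bullet> tangent s)" by (rule ext) simp
  ultimately have "((\<lambda>x. a \<bullet> \<gamma> x) has_real_derivative (a \<bullet> tangent s)) (at s)"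
    by (simp add: has_field_derivative_def)
  then show ?thesis
    by (rule DERIV_local_max[of _ _ _ 1]) (auto intro: sup gamma_in_closure)
qed

lemma curve_turns_towards_normal:
  assumes s: "s \<in> {-2..3}"
  obtains u where "normal s \<bullet> (\<gamma> (s+u) - \<gamma> s) > 0"
proof -
  obtain k0 k1 where k: "k0 > 0" "\<And>s. s \<in> {-3..4} \<Longrightarrow> k0 \<le> \<kappa> s \<and> \<kappa> s \<le> k1"
    using curvature_bounds by metis
  obtain \<delta> where \<delta>: "\<delta> > 0"
    "\<And>t u. t \<in> {-3..4} \<Longrightarrow> t + u \<in> {-3..4} \<Longrightarrow> \<bar>u\<bar> < \<delta> \<Longrightarrow>
      norm (\<gamma> (t+u) - \<gamma> t - u *\<^sub>R tangent t - (u^2/2) *\<^sub>R dtangent t) \<le> (k0/4) * u^2"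
    using taylor_uniform[of "k0/4"] k(1) by (metis divide_pos_pos zero_less_numeral)
  define u where "u = min (\<delta>/2) 1"
  have u: "u > 0" "\<bar>u\<bar> < \<delta>" "s + u \<in> {-3..4}" using \<delta>(1) s by (auto simp: u_def)
  define e where "e = \<gamma> (s+u) - \<gamma> s - u *\<^sub>R tangent s - (u^2/2) *\<^sub>R dtangent s"
  have "\<bar>normal s \<bullet> e\<bar> \<le> (k0/4) * u^2"
    using Cauchy_Schwarz_ineq2[of "normal s" e] \<delta>(2)[of s u] s u by (simp add: e_def)
  moreover have "normal s \<bullet> (\<gamma> (s+u) - \<gamma> s) = (u^2/2) * \<kappa> s + normal s \<bullet> e"
    by (simp add: e_def inner_diff_right inner_add_right dtangent_eq)
  moreover have "(u^2/2) * k0 \<le> (u^2/2) * \<kappa> s" using k(2)[of s] s by (simp add: mult_left_mono)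
  moreover have "(u^2/2) * k0 - (k0/4) * u^2 > 0" using u(1) k(1) by simp
  ultimately show ?thesis by (intro that[of u]) linarith
qed

lemma supporting_functional_eq:
  assumes s: "s \<in> {-2..3}" and a: "a \<noteq> 0"
    and sup: "\<And>y. y \<in> closure \<Omega> \<Longrightarrow> a \<bullet> y \<le> a \<bullet> \<gamma> s"
  shows "a \<bullet> normal s < 0" "a = (a \<bullet> normal s) *\<^sub>R normal s"
proof -
  show aeq: "a = (a \<bullet> normal s) *\<^sub>R normal s"
    by (rule normal_coordinate_eq[OF supporting_functional_orthogonal_tangent[OF sup]])
  obtain u where u: "normal s \<bullet> (\<gamma> (s+u) - \<gamma> s) > 0"
    using curve_turns_towards_normal[OF s] by blast
  have "(a \<bullet> normal s) * (normal s \<bullet> (\<gamma> (s+u) - \<gamma> s)) \<le> 0"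
    using sup[OF gamma_in_closure, of "s+u"] aeq
    by (metis inner_diff_right inner_scaleR_left diff_le_0_iff_le)
  moreover have "a \<bullet> normal s \<noteq> 0" using a aeq by (metis scaleR_zero_left)
  ultimately show "a \<bullet> normal s < 0" using u by (simp add: mult_le_0_iff)
qed

lemma closure_on_normal_side:
  assumes s: "s \<in> {-2..3}" and y: "y \<in> closure \<Omega>"
  shows "(y - \<gamma> s) \<bullet> normal s \<ge> 0"
proof -
  obtain a where a: "a \<noteq> 0" "\<And>y. y \<in> closure \<Omega> \<Longrightarrow> a \<bullet> \<gamma> s \<le> a \<bullet> y"
    using supporting_hyperplane_relative_frontier[OF conv gamma_in_closure[of s]] gamma_notin[of s]
      rel_interior_open[OF open_\<Omega>]
    by metis
  have "a \<bullet> tangent s = 0"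
    using supporting_functional_orthogonal_tangent[of "-a" s] a(2) by auto
  then have aeq: "a = (a \<bullet> normal s) *\<^sub>R normal s" by (rule normal_coordinate_eq)
  have pos: "a \<bullet> normal s > 0"
    using supporting_functional_eq(1)[OF s, of "-a"] a by auto
  have "(a \<bullet> normal s) * (normal s \<bullet> (y - \<gamma> s)) \<ge> 0"
    using a(2)[OF y] aeq by (metis inner_diff_right inner_scaleR_left diff_ge_0_iff_ge)
  then show ?thesis using pos by (simp add: zero_le_mult_iff inner_commute)
qed

lemma origin_depth:
  obtains \<beta> where "\<beta> > 0" "ball 0 \<beta> \<subseteq> \<Omega>" "\<And>s. s \<in> {-2..3} \<Longrightarrow> \<gamma> s \<bullet> normal s \<le> - \<beta>/2"
proof -
  obtain \<beta> where b: "\<beta> > 0" "ball 0 \<beta> \<subseteq> \<Omega>" using open_\<Omega> zero_in open_contains_ball by blast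
  have "\<gamma> s \<bullet> normal s \<le> - \<beta>/2" if s: "s \<in> {-2..3}" for s
  proof -
    have "- (\<beta>/2) *\<^sub>R normal s \<in> ball 0 \<beta>" using b(1) by simp
    then have "- (\<beta>/2) *\<^sub>R normal s \<in> closure \<Omega>" using b(2) closure_subset by blast
    from closure_on_normal_side[OF s this] show ?thesis by (simp add: inner_diff_left)
  qed
  then show ?thesis using that b by blast
qed

section \<open>The boundary near a point in tangent--normal coordinates\<close>

lemma step_curvature_le:
  assumes "\<bar>u\<bar> \<le> 1" "\<kappa> t \<le> k1"
  shows "\<bar>u\<bar> * \<kappa> t \<le> k1"
proof -
  have "\<bar>u\<bar> * \<kappa> t \<le> 1 * \<kappa> t"
    by (rule mult_right_mono) (use assms(1) curvature_pos[of t] in auto)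
  then show ?thesis using assms(2) by linarith
qed

lemma displacement_bound:
  assumes u1: "\<bar>u\<bar> \<le> 1" and e: "\<epsilon> \<le> 1" and kt: "\<kappa> t \<le> k1"
   and gamma_rem: "norm (\<gamma> (t+u) - \<gamma> t - u *\<^sub>R tangent t - (u^2/2) *\<^sub>R dtangent t) \<le> \<epsilon> * u^2"
  shows "norm (p - \<gamma> (t+u)) \<le> \<bar>(p - \<gamma> t) \<bullet> tangent t\<bar> + \<bar>(p - \<gamma> t) \<bullet> normal t\<bar> + \<bar>u\<bar> * (2 + k1/2)"
proof -
  define e1 where "e1 = \<gamma> (t+u) - \<gamma> t - u *\<^sub>R tangent t - (u^2/2) *\<^sub>R dtangent t"
  have eq: "p - \<gamma> (t+u) = (p - \<gamma> t) - u *\<^sub>R tangent t - (u^2/2 * \<kappa> t) *\<^sub>R normal t - e1"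
    by (simp add: e1_def dtangent_eq scaleR_scaleR)
  have "norm (p - \<gamma> (t+u))
      \<le> norm (p - \<gamma> t) + norm (u *\<^sub>R tangent t) + norm ((u^2/2 * \<kappa> t) *\<^sub>R normal t) + norm e1"
    using norm_triangle_ineq4[of "(p - \<gamma> t) - u *\<^sub>R tangent t - (u^2/2 * \<kappa> t) *\<^sub>R normal t" e1]
      norm_triangle_ineq4[of "(p - \<gamma> t) - u *\<^sub>R tangent t" "(u^2/2 * \<kappa> t) *\<^sub>R normal t"]
      norm_triangle_ineq4[of "p - \<gamma> t" "u *\<^sub>R tangent t"]
    unfolding eq by linarith
  moreover have "norm (p - \<gamma> t) \<le> \<bar>(p - \<gamma> t) \<bullet> tangent t\<bar> + \<bar>(p - \<gamma> t) \<bullet> normal t\<bar>"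
    by (rule norm_le_frame_coords)
  moreover have "norm ((u^2/2 * \<kappa> t) *\<^sub>R normal t) \<le> \<bar>u\<bar> * (k1/2)"
  proof -
    have "norm ((u^2/2 * \<kappa> t) *\<^sub>R normal t) = \<bar>u\<bar> * (\<bar>u\<bar> * \<kappa> t / 2)"
      using curvature_pos[of t] by (simp add: abs_mult power2_eq_square)
    then show ?thesis
      using mult_left_mono[OF step_curvature_le[OF u1 kt], of "\<bar>u\<bar>"] by simp
  qed
  moreover have "norm e1 \<le> \<bar>u\<bar>"
  proof -
    have "\<epsilon> * u^2 \<le> u^2" using mult_right_mono[OF e, of "u^2"] by simp
    also have "u^2 \<le> \<bar>u\<bar>"
      using mult_right_mono[OF u1, of "\<bar>u\<bar>"] by (simp add: power2_eq_square)
    finally show ?thesis using gamma_rem by (simp add: e1_def)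
  qed
  ultimately show ?thesis by (simp add: algebra_simps)
qed

lemma normal_coordinate_expansion:
  assumes u1: "\<bar>u\<bar> \<le> 1" and e0: "0 < \<epsilon>" "\<epsilon> \<le> 1" and kt: "\<kappa> t \<le> k1"
   and tangent_rem: "norm (tangent (t+u) - tangent t - u *\<^sub>R dtangent t) \<le> \<epsilon> * \<bar>u\<bar>"
   and gamma_rem: "norm (\<gamma> (t+u) - \<gamma> t - u *\<^sub>R tangent t - (u^2/2) *\<^sub>R dtangent t) \<le> \<epsilon> * u^2"
  shows "\<bar>(p - \<gamma> (t+u)) \<bullet> normal (t+u)
      - ((p - \<gamma> t) \<bullet> normal t + u^2 * \<kappa> t / 2 - u * \<kappa> t * ((p - \<gamma> t) \<bullet> tangent t))\<bar>
     \<le> \<epsilon> * u^2 * (1 + k1)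
      + \<epsilon> * \<bar>u\<bar> * (\<bar>(p - \<gamma> t) \<bullet> tangent t\<bar> + \<bar>(p - \<gamma> t) \<bullet> normal t\<bar> + \<bar>u\<bar> * (2 + k1/2))"
proof -
  define T n x z where "T = tangent t" and "n = normal t"
    and "x = (p - \<gamma> t) \<bullet> tangent t" and "z = (p - \<gamma> t) \<bullet> normal t"
  define e1 where "e1 = \<gamma> (t+u) - \<gamma> t - u *\<^sub>R tangent t - (u^2/2) *\<^sub>R dtangent t"
  define e3 where "e3 = normal (t+u) - normal t + (u * \<kappa> t) *\<^sub>R tangent t"
  define D where "D = p - \<gamma> (t+u)"
  have D_eq: "D = (p - \<gamma> t) - u *\<^sub>R T - (u^2/2 * \<kappa> t) *\<^sub>R n - e1"
    by (simp add: D_def e1_def T_def n_def dtangent_eq scaleR_scaleR)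
  have Dn: "D \<bullet> n = z - u^2/2 * \<kappa> t - e1 \<bullet> n"
    by (simp add: D_eq inner_diff_left z_def n_def T_def)
  have DT: "D \<bullet> T = x - u - e1 \<bullet> T"
    by (simp add: D_eq inner_diff_left x_def n_def T_def)
  have "D \<bullet> normal (t+u) = D \<bullet> n - (u * \<kappa> t) * (D \<bullet> T) + D \<bullet> e3"
    by (simp add: e3_def n_def T_def inner_diff_right inner_add_right)
  also have "\<dots> = z + u^2 * \<kappa> t / 2 - u * \<kappa> t * x + (- (e1 \<bullet> n) + u * \<kappa> t * (e1 \<bullet> T) + D \<bullet> e3)"
    by (simp add: Dn DT algebra_simps power2_eq_square)
  finally have err: "D \<bullet> normal (t+u) - (z + u^2 * \<kappa> t / 2 - u * \<kappa> t * x)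
      = - (e1 \<bullet> n) + u * \<kappa> t * (e1 \<bullet> T) + D \<bullet> e3"
    by simp
  have ne1: "norm e1 \<le> \<epsilon> * u^2" using gamma_rem by (simp add: e1_def)
  have "\<bar>e1 \<bullet> n\<bar> \<le> \<epsilon> * u^2"
    using Cauchy_Schwarz_ineq2[of e1 n] ne1 by (simp add: n_def)
  moreover have "\<bar>u * \<kappa> t * (e1 \<bullet> T)\<bar> \<le> k1 * (\<epsilon> * u^2)"
  proof -
    have "\<bar>u * \<kappa> t\<bar> \<le> k1"
      using step_curvature_le[OF u1 kt] curvature_pos[of t] by (simp add: abs_mult)
    moreover have "\<bar>e1 \<bullet> T\<bar> \<le> \<epsilon> * u^2"
      using Cauchy_Schwarz_ineq2[of e1 T] ne1 by (simp add: T_def)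
    ultimately show ?thesis by (simp add: abs_mult mult_mono')
  qed
  moreover have "\<bar>D \<bullet> e3\<bar> \<le> \<epsilon> * \<bar>u\<bar> * (\<bar>x\<bar> + \<bar>z\<bar> + \<bar>u\<bar> * (2 + k1/2))"
  proof -
    have "norm D \<le> \<bar>x\<bar> + \<bar>z\<bar> + \<bar>u\<bar> * (2 + k1/2)"
      using displacement_bound[OF u1 e0(2) kt gamma_rem] by (simp add: D_def x_def z_def)
    moreover have "norm e3 \<le> \<epsilon> * \<bar>u\<bar>" using tangent_rem normal_taylor_eq[of t u] by (simp add: e3_def)
    ultimately have "norm D * norm e3 \<le> (\<bar>x\<bar> + \<bar>z\<bar> + \<bar>u\<bar> * (2 + k1/2)) * (\<epsilon> * \<bar>u\<bar>)"
      by (simp add: mult_mono')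
    then show ?thesis
      using Cauchy_Schwarz_ineq2[of D e3] by (simp add: algebra_simps)
  qed
  ultimately have "\<bar>D \<bullet> normal (t+u) - (z + u^2 * \<kappa> t / 2 - u * \<kappa> t * x)\<bar>
      \<le> \<epsilon> * u^2 + k1 * (\<epsilon> * u^2) + \<epsilon> * \<bar>u\<bar> * (\<bar>x\<bar> + \<bar>z\<bar> + \<bar>u\<bar> * (2 + k1/2))"
    unfolding err by linarith
  then show ?thesis by (simp add: D_def x_def z_def algebra_simps)
qed

text \<open>The lower curvature bound enters here: near \<open>\<gamma> t\<close>, the closure of \<open>\<Omega>\<close> lies inside a
  parabola tangent to the boundary at \<open>\<gamma> t\<close>.\<close>

lemma closure_width_bound:
  obtains K h0 where "K > 0" "h0 > 0"
    "\<And>t y h. t \<in> {0..1} \<Longrightarrow> y \<in> closure \<Omega> \<Longrightarrow> 0 < h \<Longrightarrow> h \<le> h0 \<Longrightarrow>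
       (y - \<gamma> t) \<bullet> normal t \<le> h \<Longrightarrow> \<bar>(y - \<gamma> t) \<bullet> tangent t\<bar> \<le> K * sqrt h"
proof -
  obtain k0 k1 where k: "k0 > 0" "\<And>s. s \<in> {-3..4} \<Longrightarrow> k0 \<le> \<kappa> s \<and> \<kappa> s \<le> k1"
    using curvature_bounds by metis
  define \<epsilon> where "\<epsilon> = min (k0/2) 1"
  have e: "\<epsilon> > 0" "\<epsilon> \<le> k0/2" "\<epsilon> \<le> 1" using k(1) by (auto simp: \<epsilon>_def)
  obtain \<delta> where \<delta>: "\<delta> > 0"
    "\<And>t u. t \<in> {-3..4} \<Longrightarrow> t + u \<in> {-3..4} \<Longrightarrow> \<bar>u\<bar> < \<delta> \<Longrightarrow>
        norm (tangent (t+u) - tangent t - u *\<^sub>R dtangent t) \<le> \<epsilon> * \<bar>u\<bar>"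
    "\<And>t u. t \<in> {-3..4} \<Longrightarrow> t + u \<in> {-3..4} \<Longrightarrow> \<bar>u\<bar> < \<delta> \<Longrightarrow>
        norm (\<gamma> (t+u) - \<gamma> t - u *\<^sub>R tangent t - (u^2/2) *\<^sub>R dtangent t) \<le> \<epsilon> * u^2"
    using taylor_uniform[OF e(1)] by metis
  define r0 where "r0 = min (\<delta>/2) 1"
  have r0: "r0 > 0" "r0 < \<delta>" "r0 \<le> 1" using \<delta>(1) by (auto simp: r0_def)
  show ?thesis
  proof (rule that[of "2 * (5 + 2 * k1) / k0" "r0^2"])
    show "2 * (5 + 2 * k1) / k0 > 0" "r0^2 > 0" using k r0 by force+
    fix t y h assume t: "t \<in> {0..1}" and y: "y \<in> closure \<Omega>" and h: "0 < h" "h \<le> r0^2"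
      and yh: "(y - \<gamma> t) \<bullet> normal t \<le> h"
    define x z r where "x = (y - \<gamma> t) \<bullet> tangent t" and "z = (y - \<gamma> t) \<bullet> normal t"
      and "r = sqrt h"
    have "r \<le> r0" using real_sqrt_le_mono[OF h(2)] r0(1) by (simp add: r_def)
    with r0 have r: "0 < r" "r \<le> 1" "r < \<delta>" "r^2 = h"
      using h by (simp_all only: r_def) auto
    text \<open>Step along the curve by \<open>\<surd>h\<close> in the direction of \<open>x\<close>; the supporting line there
      forces \<open>x = O(\<surd>h)\<close>.\<close>
    define u where "u = (if x \<ge> 0 then r else - r)"
    have u: "\<bar>u\<bar> = r" "u * x = r * \<bar>x\<bar>" using r by (auto simp: u_def)
    have tu: "t \<in> {-3..4}" "t + u \<in> {-3..4}" "t + u \<in> {-2..3}" "\<bar>u\<bar> \<le> 1" "\<bar>u\<bar> < \<delta>"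
      using t u r by auto
    have kt: "k0 \<le> \<kappa> t" "\<kappa> t \<le> k1" using k(2)[of t] t by auto
    have "\<bar>x\<bar> \<le> 2 * (5 + 2 * k1) / k0 * r"
    proof (rule perturbed_parabola_width[OF k(1) kt e(1-3) r(1,2) u])
      show "0 \<le> z" using closure_on_normal_side[of t y] t y by (simp add: z_def)
      show "z \<le> r^2" using yh r(4) by (simp add: z_def)
      show "0 \<le> (y - \<gamma> (t+u)) \<bullet> normal (t+u)" using closure_on_normal_side[OF tu(3) y] .
      show "\<bar>(y - \<gamma> (t+u)) \<bullet> normal (t+u) - (z + u^2 * \<kappa> t / 2 - u * \<kappa> t * x)\<bar>
          \<le> \<epsilon> * u^2 * (1 + k1) + \<epsilon> * \<bar>u\<bar> * (\<bar>x\<bar> + \<bar>z\<bar> + \<bar>u\<bar> * (2 + k1/2))"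
        using normal_coordinate_expansion[OF tu(4) e(1,3) kt(2) \<delta>(2)[OF tu(1,2,5)] \<delta>(3)[OF tu(1,2,5)]]
        by (simp add: x_def z_def)
    qed
    then show "\<bar>(y - \<gamma> t) \<bullet> tangent t\<bar> \<le> 2 * (5 + 2 * k1) / k0 * sqrt h"
      by (simp add: x_def r_def)
  qed
qed

lemma curve_chord_lower_bound:
  assumes "\<delta> > 0"
  obtains m where "m > 0" "\<And>t v. t \<in> {0..1} \<Longrightarrow> \<delta> \<le> \<bar>v\<bar> \<Longrightarrow> \<bar>v\<bar> \<le> 1/2 \<Longrightarrow> m \<le> norm (\<gamma> (t+v) - \<gamma> t)"
proof (cases "\<delta> \<le> 1/2")
  case False
  show ?thesis by (rule that[of 1]) (use False in auto)
next
  case True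
  define C where "C = {0..1::real} \<times> ({-1/2..-\<delta>} \<union> {\<delta>..1/2})"
  define f where "f = (\<lambda>p::real\<times>real. norm (\<gamma> (fst p + snd p) - \<gamma> (fst p)))"
  have cC: "compact C" unfolding C_def by (intro compact_Times compact_Un compact_Icc)
  have neC: "C \<noteq> {}" using True by (auto simp: C_def)
  have cf: "continuous_on C f"
  proof -
    have a: "continuous_on UNIV (\<lambda>p::real\<times>real. fst p + snd p)" by (intro continuous_intros)
    have b: "continuous_on UNIV (\<lambda>p::real\<times>real. fst p)" by (intro continuous_intros)
    have c1: "continuous_on UNIV (\<lambda>p::real\<times>real. \<gamma> (fst p + snd p))"
      by (rule continuous_on_compose2[OF continuous_on_gamma a subset_UNIV])
    have c2: "continuous_on UNIV (\<lambda>p::real\<times>real. \<gamma> (fst p))"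
      by (rule continuous_on_compose2[OF continuous_on_gamma b subset_UNIV])
    have "continuous_on UNIV f" unfolding f_def
      by (intro continuous_on_norm continuous_on_diff c1 c2)
    then show ?thesis using continuous_on_subset by blast
  qed
  obtain p where p: "p \<in> C" "\<And>q. q \<in> C \<Longrightarrow> f p \<le> f q"
    using continuous_attains_inf[OF cC neC cf] by blast
  have pos: "f p > 0"
  proof (rule ccontr)
    assume "\<not> f p > 0"
    then have "\<gamma> (fst p + snd p) = \<gamma> (fst p)" by (simp add: f_def)
    from gamma_eq_imp_int_diff[OF this] obtain k :: int where "fst p + snd p - fst p = of_int k" by blast
    then have k: "snd p = of_int k" by simp
    have "\<delta> \<le> \<bar>snd p\<bar>" "\<bar>snd p\<bar> \<le> 1/2" using p(1) assms by (auto simp: C_def abs_if)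
    then have "\<bar>of_int k :: real\<bar> \<le> 1/2" "\<bar>of_int k :: real\<bar> > 0" using k assms by auto
    then have "k \<noteq> 0" by auto
    then have "1 \<le> \<bar>k\<bar>" by presburger
    then have "(1::real) \<le> \<bar>of_int k\<bar>" by (metis of_int_1_le_iff of_int_abs)
    then show False using \<open>\<bar>of_int k :: real\<bar> \<le> 1/2\<close> by linarith
  qed
  show ?thesis
  proof (rule that[OF pos])
    fix t v :: real assume "t \<in> {0..1}" "\<delta> \<le> \<bar>v\<bar>" "\<bar>v\<bar> \<le> 1/2"
    then have "(t, v) \<in> C" by (auto simp: C_def)
    from p(2)[OF this] show "f p \<le> norm (\<gamma> (t+v) - \<gamma> t)" by (simp add: f_def)
  qed
qed

lemma closest_point_in_frontier:
  assumes "p \<notin> closure \<Omega>"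
  shows "closest_point (closure \<Omega>) p \<in> frontier \<Omega>"
proof -
  have int: "interior \<Omega> = \<Omega>" and ne: "\<Omega> \<noteq> {}" using open_\<Omega> zero_in by (auto simp: interior_open)
  have "affine hull (closure \<Omega>) = UNIV"
    using affine_hull_nonempty_interior[of \<Omega>] int ne by simp
  moreover have "rel_interior (closure \<Omega>) = \<Omega>"
    by (simp add: convex_rel_interior_closure[OF conv] rel_interior_open[OF open_\<Omega>])
  ultimately have "closest_point (closure \<Omega>) p \<in> rel_frontier (closure \<Omega>)"
    using assms closure_subset ne by (intro closest_point_in_rel_frontier) auto
  then show ?thesis
    using \<open>rel_interior (closure \<Omega>) = \<Omega>\<close> by (simp add: rel_frontier_def frontier_def int)
qed

lemma frontier_parameter_near:
  assumes t: "t \<in> {0..1}" and \<pi>: "\<pi> \<in> frontier \<Omega>"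
  obtains s where "\<bar>s - t\<bar> \<le> 1/2" "s \<in> {-2..3}" "\<gamma> s = \<pi>"
proof -
  obtain s1 where s1: "s1 \<in> {0..1}" "\<gamma> s1 = \<pi>" using \<pi> image by (metis imageE)
  consider "t - s1 > 1/2" | "t - s1 < - 1/2" | "\<bar>s1 - t\<bar> \<le> 1/2" by linarith
  then show ?thesis
  proof cases
    case 1
    then show ?thesis using t s1 periodic[of s1] by (intro that[of "s1 + 1"]) auto
  next
    case 2
    then show ?thesis using t s1 periodic[of "s1 - 1"] by (intro that[of "s1 - 1"]) auto
  next
    case 3
    then show ?thesis using t s1 by (intro that[of s1]) auto
  qed
qed

text \<open>A point just outside \<open>\<Omega>\<close> near \<open>\<gamma> t\<close> lies strictly on the outer side of the tangent line
  at its nearest boundary point \<open>\<gamma> s\<close>, and \<open>s\<close> is close to \<open>t\<close> because distinct boundary points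
  far apart in parameter are far apart in the plane.\<close>

lemma exterior_point_below_nearby_tangent:
  assumes "\<delta> > 0"
  obtains \<rho> where "\<rho> > 0"
    "\<And>t p. t \<in> {0..1} \<Longrightarrow> norm (p - \<gamma> t) \<le> \<rho> \<Longrightarrow> p \<notin> closure \<Omega> \<Longrightarrow>
       \<exists>u. \<bar>u\<bar> < \<delta> \<and> \<bar>u\<bar> \<le> 1 \<and> (p - \<gamma> (t+u)) \<bullet> normal (t+u) < 0"
proof -
  obtain m where m: "m > 0"
    "\<And>t v. t \<in> {0..1} \<Longrightarrow> min \<delta> 1 \<le> \<bar>v\<bar> \<Longrightarrow> \<bar>v\<bar> \<le> 1/2 \<Longrightarrow> m \<le> norm (\<gamma> (t+v) - \<gamma> t)"
    using curve_chord_lower_bound[of "min \<delta> 1"] assms by auto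
  show ?thesis
  proof (rule that[of "m/4"])
    show "m/4 > 0" using m(1) by simp
    fix t p assume t: "t \<in> {0..1}" and pr: "norm (p - \<gamma> t) \<le> m/4" and pn: "p \<notin> closure \<Omega>"
    define \<pi> where "\<pi> = closest_point (closure \<Omega>) p"
    obtain s where s: "\<bar>s - t\<bar> \<le> 1/2" "s \<in> {-2..3}" "\<gamma> s = \<pi>"
      using frontier_parameter_near[OF t closest_point_in_frontier[OF pn]] \<pi>_def by blast
    have "norm (p - \<pi>) \<le> norm (p - \<gamma> t)"
      using closest_point_le[OF closed_closure gamma_in_closure[of t]] by (simp add: \<pi>_def dist_norm)
    then have "norm (\<gamma> s - \<gamma> t) < m"
      using s(3) norm_triangle_ineq4[of "p - \<gamma> t" "p - \<pi>"] pr m(1)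
      by (simp add: norm_minus_commute)
    then have u: "\<bar>s - t\<bar> < \<delta>" "\<bar>s - t\<bar> \<le> 1"
      using m(2)[OF t, of "s - t"] s(1) by force+
    have "(p - \<pi>) \<bullet> normal s < 0"
    proof (rule supporting_functional_eq(1)[OF s(2)])
      have "closure \<Omega> \<noteq> {}" using zero_in closure_subset by blast
      then show "p - \<pi> \<noteq> 0" using pn closest_point_in_set[OF closed_closure, of \<Omega> p]
        by (auto simp: \<pi>_def)
      show "(p - \<pi>) \<bullet> y \<le> (p - \<pi>) \<bullet> \<gamma> s" if "y \<in> closure \<Omega>" for y
        using closest_point_dot[OF convex_closure[OF conv] closed_closure that, of p] s(3)
        by (simp add: \<pi>_def inner_diff_right)
    qed
    with u s(3) show "\<exists>u. \<bar>u\<bar> < \<delta> \<and> \<bar>u\<bar> \<le> 1 \<and> (p - \<gamma> (t+u)) \<bullet> normal (t+u) < 0"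
      by (intro exI[of _ "s - t"]) (simp add: inner_commute)
  qed
qed

text \<open>The upper curvature bound enters here: near \<open>\<gamma> t\<close>, a parabola tangent to the boundary
  at \<open>\<gamma> t\<close> lies in the closure of \<open>\<Omega>\<close>.\<close>

lemma parabola_region_in_closure:
  obtains \<rho> K2 where "\<rho> > 0" "K2 > 0"
    "\<And>t p. t \<in> {0..1} \<Longrightarrow> norm (p - \<gamma> t) \<le> \<rho> \<Longrightarrow>
       (p - \<gamma> t) \<bullet> normal t \<ge> K2 * ((p - \<gamma> t) \<bullet> tangent t)^2 \<Longrightarrow> p \<in> closure \<Omega>"
proof -
  obtain k0 k1 where k: "k0 > 0" "\<And>s. s \<in> {-3..4} \<Longrightarrow> k0 \<le> \<kappa> s \<and> \<kappa> s \<le> k1"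
    using curvature_bounds by metis
  have k01: "k0 \<le> k1" using k(2)[of 0] by auto
  define \<epsilon> where "\<epsilon> = min (1/2) (k0 / (13 + 6*k1))"
  have e: "\<epsilon> > 0" "\<epsilon> \<le> 1/2" "\<epsilon> * (13 + 6*k1) \<le> k0"
    using k(1) k01 by (auto simp: \<epsilon>_def min_def pos_le_divide_eq)
  obtain \<delta> where \<delta>: "\<delta> > 0"
    "\<And>t u. t \<in> {-3..4} \<Longrightarrow> t + u \<in> {-3..4} \<Longrightarrow> \<bar>u\<bar> < \<delta> \<Longrightarrow>
        norm (tangent (t+u) - tangent t - u *\<^sub>R dtangent t) \<le> \<epsilon> * \<bar>u\<bar>"
    "\<And>t u. t \<in> {-3..4} \<Longrightarrow> t + u \<in> {-3..4} \<Longrightarrow> \<bar>u\<bar> < \<delta> \<Longrightarrow>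
        norm (\<gamma> (t+u) - \<gamma> t - u *\<^sub>R tangent t - (u^2/2) *\<^sub>R dtangent t) \<le> \<epsilon> * u^2"
    using taylor_uniform[OF e(1)] by metis
  obtain \<rho> where \<rho>: "\<rho> > 0"
    "\<And>t p. t \<in> {0..1} \<Longrightarrow> norm (p - \<gamma> t) \<le> \<rho> \<Longrightarrow> p \<notin> closure \<Omega> \<Longrightarrow>
       \<exists>u. \<bar>u\<bar> < \<delta> \<and> \<bar>u\<bar> \<le> 1 \<and> (p - \<gamma> (t+u)) \<bullet> normal (t+u) < 0"
    using exterior_point_below_nearby_tangent[OF \<delta>(1)] by metis
  show ?thesis
  proof (rule that[OF \<rho>(1), of "15 + 7*k1"])
    show "15 + 7*k1 > 0" using k(1) k01 by auto
    fix t p assume t: "t \<in> {0..1}" and pr: "norm (p - \<gamma> t) \<le> \<rho>"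
      and pz: "(p - \<gamma> t) \<bullet> normal t \<ge> (15 + 7*k1) * ((p - \<gamma> t) \<bullet> tangent t)^2"
    show "p \<in> closure \<Omega>"
    proof (rule ccontr)
      assume "p \<notin> closure \<Omega>"
      then obtain u where u: "\<bar>u\<bar> < \<delta>" "\<bar>u\<bar> \<le> 1" and V: "(p - \<gamma> (t+u)) \<bullet> normal (t+u) < 0"
        using \<rho>(2)[OF t pr] by blast
      have tI: "t \<in> {-3..4}" "t + u \<in> {-3..4}" using t u by auto
      have kt: "k0 \<le> \<kappa> t" "\<kappa> t \<le> k1" using k(2)[of t] t by auto
      have "(p - \<gamma> (t+u)) \<bullet> normal (t+u) \<ge> 0"
        using e by (intro perturbed_parabola_nonneg[OF k(1) kt e u(2) pz]
            normal_coordinate_expansion[OF u(2) e(1) _ kt(2) \<delta>(2)[OF tI u(1)] \<delta>(3)[OF tI u(1)]]) auto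
      with V show False by simp
    qed
  qed
qed

section \<open>Area of the central sections\<close>

definition frame_rect where
  "frame_rect c t a b = {y. \<bar>(y - c) \<bullet> tangent t\<bar> \<le> a \<and> \<bar>(y - c) \<bullet> normal t\<bar> \<le> b}"

lemma frame_rect_measure:
  assumes "a \<ge> 0" "b \<ge> 0"
  shows "frame_rect c t a b \<in> lmeasurable" "measure lebesgue (frame_rect c t a b) = 4 * a * b"
  using measure_frame_rectangle[OF frame_orthonormal frame_decomp assms] by (auto simp: frame_rect_def)

lemma measure_frame_rect_le_central_section:
  assumes sub: "frame_rect c t a b \<subseteq> \<Omega>" and ab: "a \<ge> 0" "b \<ge> 0"
  shows "4 * a * b \<le> measure lebesgue (central_section \<Omega> c)"
proof -
  have "2 *\<^sub>R c - y \<in> frame_rect c t a b" if "y \<in> frame_rect c t a b" for y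
  proof -
    have "2 *\<^sub>R c - y - c = - (y - c)" by (simp add: scaleR_2)
    then show ?thesis using that by (simp only: frame_rect_def mem_Collect_eq inner_minus_left abs_minus_cancel)
  qed
  then have "frame_rect c t a b \<subseteq> central_section \<Omega> c"
    using sub by (auto simp: central_section_def)
  then show ?thesis
    using frame_rect_measure[OF ab, of c t] lmeasurable_central_section[OF open_\<Omega> bdd]
    by (metis measure_mono_fmeasurable fmeasurableD)
qed

lemma central_section_slab:
  assumes t: "t \<in> {-2..3}" and y: "y \<in> central_section \<Omega> ((1 - s) *\<^sub>R \<gamma> t)"
  shows "y \<in> closure \<Omega>" "0 \<le> (y - \<gamma> t) \<bullet> normal t" "(y - \<gamma> t) \<bullet> normal t \<le> - 2 * s * (\<gamma> t \<bullet> normal t)"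
proof -
  have y1: "y \<in> closure \<Omega>" "2 *\<^sub>R ((1 - s) *\<^sub>R \<gamma> t) - y \<in> closure \<Omega>"
    using y closure_subset by (auto simp: central_section_def)
  then show "y \<in> closure \<Omega>" "0 \<le> (y - \<gamma> t) \<bullet> normal t"
    using closure_on_normal_side[OF t] by auto
  have "2 *\<^sub>R ((1 - s) *\<^sub>R \<gamma> t) - y - \<gamma> t = - (y - \<gamma> t) - (2 * s) *\<^sub>R \<gamma> t"
    by (simp add: algebra_simps scaleR_2)
  moreover have "0 \<le> (2 *\<^sub>R ((1 - s) *\<^sub>R \<gamma> t) - y - \<gamma> t) \<bullet> normal t"
    by (rule closure_on_normal_side[OF t y1(2)])
  ultimately have "0 \<le> (- (y - \<gamma> t) - (2 * s) *\<^sub>R \<gamma> t) \<bullet> normal t" by (simp only:)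
  then show "(y - \<gamma> t) \<bullet> normal t \<le> - 2 * s * (\<gamma> t \<bullet> normal t)"
    by (simp add: inner_diff_left)
qed

text \<open>Upper bound: the central section lies in the thin slab of width \<open>h\<close> above the tangent
  line, and there the closure is only \<open>O(\<surd>h)\<close> wide.\<close>

lemma measure_central_section_thin:
  obtains K h0 where "K > 0" "h0 > 0"
    "\<And>t s h. t \<in> {0..1} \<Longrightarrow> h = - 2 * s * (\<gamma> t \<bullet> normal t) \<Longrightarrow> 0 < h \<Longrightarrow> h \<le> h0 \<Longrightarrow>
      measure lebesgue (central_section \<Omega> ((1 - s) *\<^sub>R \<gamma> t)) \<le> 2 * K * (h * sqrt h)"
proof -
  obtain K h0 where Kh: "K > 0" "h0 > 0"
    "\<And>t y h. t \<in> {0..1} \<Longrightarrow> y \<in> closure \<Omega> \<Longrightarrow> 0 < h \<Longrightarrow> h \<le> h0 \<Longrightarrow>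
       (y - \<gamma> t) \<bullet> normal t \<le> h \<Longrightarrow> \<bar>(y - \<gamma> t) \<bullet> tangent t\<bar> \<le> K * sqrt h"
    using closure_width_bound by metis
  show ?thesis
  proof (rule that[OF Kh(1,2)])
    fix t s h assume t: "t \<in> {0..1}" and h: "h = - 2 * s * (\<gamma> t \<bullet> normal t)" "0 < h" "h \<le> h0"
    define R where "R = frame_rect (\<gamma> t + (h/2) *\<^sub>R normal t) t (K * sqrt h) (h/2)"
    have "central_section \<Omega> ((1 - s) *\<^sub>R \<gamma> t) \<subseteq> R"
    proof
      fix y assume y: "y \<in> central_section \<Omega> ((1 - s) *\<^sub>R \<gamma> t)"
      note slab = central_section_slab[of t y s]
      have "\<bar>(y - \<gamma> t) \<bullet> tangent t\<bar> \<le> K * sqrt h"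
        using Kh(3)[OF t _ h(2,3)] slab t y h(1) by auto
      moreover have "\<bar>(y - \<gamma> t) \<bullet> normal t - h/2\<bar> \<le> h/2"
        using slab t y h(1) by auto
      ultimately show "y \<in> R"
        by (simp add: R_def frame_rect_def inner_diff_left inner_add_left algebra_simps)
    qed
    then have "measure lebesgue (central_section \<Omega> ((1 - s) *\<^sub>R \<gamma> t)) \<le> measure lebesgue R"
      using frame_rect_measure(1)[of "K * sqrt h" "h/2"] Kh(1) h(2)
        lmeasurable_central_section[OF open_\<Omega> bdd]
      by (intro measure_mono_fmeasurable) (auto simp: R_def)
    also have "\<dots> = 2 * K * (h * sqrt h)"
      using frame_rect_measure(2)[of "K * sqrt h" "h/2"] Kh(1) h(2) by (simp add: R_def)
    finally show "measure lebesgue (central_section \<Omega> ((1 - s) *\<^sub>R \<gamma> t)) \<le> 2 * K * (h * sqrt h)" .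
  qed
qed

lemma measure_central_section_upper:
  obtains CU where "CU > 0" "\<And>t s. t \<in> {0..1} \<Longrightarrow> 0 < s \<Longrightarrow> s \<le> 1 \<Longrightarrow>
     measure lebesgue (central_section \<Omega> ((1 - s) *\<^sub>R \<gamma> t)) \<le> CU * (s * sqrt s)"
proof -
  obtain K h0 where Kh: "K > 0" "h0 > 0"
    "\<And>t s h. t \<in> {0..1} \<Longrightarrow> h = - 2 * s * (\<gamma> t \<bullet> normal t) \<Longrightarrow> 0 < h \<Longrightarrow> h \<le> h0 \<Longrightarrow>
      measure lebesgue (central_section \<Omega> ((1 - s) *\<^sub>R \<gamma> t)) \<le> 2 * K * (h * sqrt h)"
    using measure_central_section_thin by metis
  obtain M where M: "M > 0" "\<And>y. y \<in> closure \<Omega> \<Longrightarrow> norm y \<le> M" using closure_bounded by metis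
  obtain \<beta> where \<beta>: "\<beta> > 0" "\<And>s. s \<in> {-2..3} \<Longrightarrow> \<gamma> s \<bullet> normal s \<le> - \<beta>/2"
    using origin_depth by metis
  define s0 where "s0 = h0 / (2 * M)"
  have s0: "s0 > 0" using Kh(2) M(1) by (simp add: s0_def)
  define CU where "CU = max (2 * K * (2 * M) * sqrt (2 * M)) (measure lebesgue \<Omega> / (s0 * sqrt s0))"
  show ?thesis
  proof (rule that)
    show "CU > 0" using Kh(1) M(1) by (simp add: CU_def less_max_iff_disj)
    fix t s :: real assume t: "t \<in> {0..1}" and s: "0 < s" "s \<le> 1"
    define h where "h = - 2 * s * (\<gamma> t \<bullet> normal t)"
    have "\<bar>\<gamma> t \<bullet> normal t\<bar> \<le> M"
      using Cauchy_Schwarz_ineq2[of "\<gamma> t" "normal t"] M(2)[OF gamma_in_closure[of t]] by simp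
    then have g: "- (\<gamma> t \<bullet> normal t) \<le> M" "\<gamma> t \<bullet> normal t < 0"
      using \<beta>(1) \<beta>(2)[of t] t by auto
    have "s * (\<gamma> t \<bullet> normal t) < 0" using g(2) s(1) by (simp add: mult_pos_neg)
    moreover have "- (s * (\<gamma> t \<bullet> normal t)) \<le> M * s"
      using mult_right_mono[OF g(1) less_imp_le[OF s(1)]] by (simp add: mult.commute)
    ultimately have hM: "0 < h" "h \<le> 2 * M * s" by (simp_all add: h_def)
    show "measure lebesgue (central_section \<Omega> ((1 - s) *\<^sub>R \<gamma> t)) \<le> CU * (s * sqrt s)"
    proof (cases "h \<le> h0")
      case True
      have "sqrt h \<le> sqrt (2 * M) * sqrt s" using hM(2) by (simp flip: real_sqrt_mult)
      then have "h * sqrt h \<le> (2 * M * s) * (sqrt (2 * M) * sqrt s)"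
        using hM by (intro mult_mono) auto
      then have "2 * K * (h * sqrt h) \<le> 2 * K * ((2 * M * s) * (sqrt (2 * M) * sqrt s))"
        by (rule mult_left_mono) (use Kh(1) in simp)
      also have "\<dots> = 2 * K * (2 * M) * sqrt (2 * M) * (s * sqrt s)" by (simp add: mult_ac)
      also have "\<dots> \<le> CU * (s * sqrt s)"
        using s by (intro mult_right_mono) (auto simp: CU_def)
      finally show ?thesis using Kh(3)[OF t h_def hM(1) True] by linarith
    next
      case False
      then have "h0 < (2 * M) * s" using hM(2) by linarith
      then have "s0 < s" using M(1) by (simp add: s0_def pos_divide_less_eq mult.commute)
      then have ss: "s0 * sqrt s0 \<le> s * sqrt s" using s0 by (intro mult_mono) auto
      have "measure lebesgue \<Omega> \<le> (measure lebesgue \<Omega> / (s0 * sqrt s0)) * (s * sqrt s)"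
        using s0 mult_left_mono[OF ss, of "measure lebesgue \<Omega> / (s0 * sqrt s0)"] by simp
      also have "\<dots> \<le> CU * (s * sqrt s)"
        using s by (intro mult_right_mono) (auto simp: CU_def)
      finally show ?thesis
        using measure_central_section_le[OF open_\<Omega> bdd] by (meson order_trans)
    qed
  qed
qed

text \<open>Lower bound: close to the boundary, a rectangle of width \<open>\<approx> \<surd>s\<close> and height \<open>\<approx> s\<close>
  centred at \<open>(1 - s) \<gamma> t\<close> fits under the inner parabola; further inside, a square of side
  \<open>\<approx> s\<close> fits into \<open>\<Omega>\<close>.\<close>

lemma frame_rect_in_Omega:
  assumes ab: "a > 0" "b > 0" and sub: "frame_rect c t (2*a) (2*b) \<subseteq> closure \<Omega>"
  shows "frame_rect c t a b \<subseteq> \<Omega>"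
proof -
  define V where "V = {y. \<bar>(y - c) \<bullet> tangent t\<bar> < 2*a \<and> \<bar>(y - c) \<bullet> normal t\<bar> < 2*b}"
  have "open V" unfolding V_def
    by (intro open_Collect_conj open_Collect_less continuous_intros)
  moreover have "V \<subseteq> closure \<Omega>" using sub by (auto simp: V_def frame_rect_def)
  ultimately have "V \<subseteq> interior (closure \<Omega>)" by (simp add: interior_maximal)
  then have "V \<subseteq> \<Omega>" using convex_interior_closure[OF conv] open_\<Omega> by (simp add: interior_open)
  moreover have "frame_rect c t a b \<subseteq> V" using ab by (auto simp: V_def frame_rect_def)
  ultimately show ?thesis by blast
qed

lemma frame_rect_under_parabola:
  assumes parabola: "\<And>p. norm (p - \<gamma> t) \<le> \<rho> \<Longrightarrow>
       (p - \<gamma> t) \<bullet> normal t \<ge> K2 * ((p - \<gamma> t) \<bullet> tangent t)^2 \<Longrightarrow> p \<in> closure \<Omega>"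
    and K2: "K2 > 0" and s: "s > 0" and B: "0 < B'" "B' \<le> - (\<gamma> t \<bullet> normal t)"
    and M: "- (\<gamma> t \<bullet> normal t) \<le> M" "\<bar>\<gamma> t \<bullet> tangent t\<bar> \<le> M"
    and a: "s * M \<le> a" "5 * a \<le> \<rho>" "a^2 = s * B' / (32 * K2)"
  shows "frame_rect ((1 - s) *\<^sub>R \<gamma> t) t (2*a) (s * B' / 2) \<subseteq> closure \<Omega>"
proof
  fix y assume "y \<in> frame_rect ((1 - s) *\<^sub>R \<gamma> t) t (2*a) (s * B' / 2)"
  then have y: "\<bar>(y - (1 - s) *\<^sub>R \<gamma> t) \<bullet> tangent t\<bar> \<le> 2*a"
      "\<bar>(y - (1 - s) *\<^sub>R \<gamma> t) \<bullet> normal t\<bar> \<le> s * B' / 2"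
    by (auto simp: frame_rect_def)
  define x z where "x = (y - \<gamma> t) \<bullet> tangent t" and "z = (y - \<gamma> t) \<bullet> normal t"
  have yq: "y - \<gamma> t = (y - (1 - s) *\<^sub>R \<gamma> t) - s *\<^sub>R \<gamma> t" by (simp add: algebra_simps)
  have "\<bar>s * (\<gamma> t \<bullet> tangent t)\<bar> \<le> s * M" using M(2) s by (simp add: abs_mult mult_left_mono)
  then have x3: "\<bar>x\<bar> \<le> 3 * a" using y(1) a(1) unfolding x_def yq by (simp add: inner_diff_left)
  have sB: "s * B' \<le> s * - (\<gamma> t \<bullet> normal t)" "s * - (\<gamma> t \<bullet> normal t) \<le> s * M"
    using mult_left_mono[OF B(2), of s] mult_left_mono[OF M(1), of s] s by auto
  have ze: "z = (y - (1 - s) *\<^sub>R \<gamma> t) \<bullet> normal t + s * - (\<gamma> t \<bullet> normal t)"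
    unfolding z_def yq by (simp add: inner_diff_left)
  have z1: "z \<ge> s * B' / 2" and z2: "z \<le> 2 * a" using ze y(2) sB a(1) by (auto simp: abs_le_iff)
  have "K2 * x^2 \<le> K2 * (3 * a)^2"
    using power_mono[OF x3, of 2] K2 by (simp add: mult_left_mono)
  also have "\<dots> = 9 * (s * B') / 32" using a(3) K2 by (simp add: power_mult_distrib field_simps)
  also have "\<dots> \<le> z" using z1 mult_pos_pos[OF s B(1)] by linarith
  finally have "K2 * x^2 \<le> z" .
  moreover have "norm (y - \<gamma> t) \<le> \<rho>"
  proof -
    have "norm (y - \<gamma> t) \<le> \<bar>x\<bar> + \<bar>z\<bar>" by (simp add: x_def z_def norm_le_frame_coords)
    moreover have "\<bar>z\<bar> = z" using z1 mult_pos_pos[OF s B(1)] by simp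
    ultimately show ?thesis using x3 z2 a(2) by linarith
  qed
  ultimately show "y \<in> closure \<Omega>" using parabola by (simp add: x_def z_def)
qed

lemma measure_central_section_near:
  obtains C1 s1 where "C1 > 0" "s1 > 0" "\<And>t s. t \<in> {0..1} \<Longrightarrow> 0 < s \<Longrightarrow> s \<le> s1 \<Longrightarrow>
     C1 * (s * sqrt s) \<le> measure lebesgue (central_section \<Omega> ((1 - s) *\<^sub>R \<gamma> t))"
proof -
  obtain \<rho> K2 where LM: "\<rho> > 0" "K2 > 0"
    "\<And>t p. t \<in> {0..1} \<Longrightarrow> norm (p - \<gamma> t) \<le> \<rho> \<Longrightarrow>
       (p - \<gamma> t) \<bullet> normal t \<ge> K2 * ((p - \<gamma> t) \<bullet> tangent t)^2 \<Longrightarrow> p \<in> closure \<Omega>"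
    using parabola_region_in_closure by metis
  obtain M where M: "M > 0" "\<And>y. y \<in> closure \<Omega> \<Longrightarrow> norm y \<le> M" using closure_bounded by metis
  obtain \<beta> where \<beta>: "\<beta> > 0" "\<And>s. s \<in> {-2..3} \<Longrightarrow> \<gamma> s \<bullet> normal s \<le> - \<beta>/2"
    using origin_depth by metis
  define B' where "B' = \<beta>/2"
  define s1 where "s1 = min (B' / (32 * K2 * M^2)) (32 * K2 * \<rho>^2 / (25 * B'))"
  show ?thesis
  proof (rule that[of "B' * sqrt (B' / (32 * K2))" s1])
    show "B' * sqrt (B' / (32 * K2)) > 0" "s1 > 0" using \<beta>(1) LM M(1) by (simp_all add: B'_def s1_def)
    fix t s :: real assume t: "t \<in> {0..1}" and s: "0 < s" "s \<le> s1"
    define a b where "a = sqrt (s * B' / (32 * K2))" and "b = s * B' / 4"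
    have ab: "a > 0" "b > 0" "a^2 = s * B' / (32 * K2)" using s \<beta>(1) LM(2) by (simp_all add: a_def b_def B'_def)
    have "s * (32 * K2 * M^2) \<le> B'"
      using s LM(2) M(1) by (simp add: s1_def pos_le_divide_eq)
    then have "s * (s * (32 * K2 * M^2)) \<le> s * B'" using s by (simp add: mult_left_mono)
    moreover have "(32 * K2) * (s * M)^2 = s * (s * (32 * K2 * M^2))" by (simp add: power2_eq_square)
    moreover have a2: "(32 * K2) * a^2 = s * B'" using ab(3) LM(2) by simp
    ultimately have "(32 * K2) * (s * M)^2 \<le> (32 * K2) * a^2" by linarith
    then have "(s * M)^2 \<le> a^2" by (rule mult_left_le_imp_le) (use LM(2) in simp)
    then have sMa: "s * M \<le> a" using ab(1) by (simp add: power2_le_iff_abs_le)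
    have "s * (25 * B') \<le> 32 * K2 * \<rho>^2"
      using s \<beta>(1) by (simp add: s1_def B'_def pos_le_divide_eq)
    moreover have "(32 * K2) * (5 * a)^2 = s * (25 * B')" using a2 by (simp add: power_mult_distrib mult_ac)
    ultimately have "(32 * K2) * (5 * a)^2 \<le> (32 * K2) * \<rho>^2" by linarith
    then have "(5 * a)^2 \<le> \<rho>^2" by (rule mult_left_le_imp_le) (use LM(2) in simp)
    then have a5: "5 * a \<le> \<rho>" by (rule power2_le_imp_le) (use LM(1) in simp)
    have g: "B' \<le> - (\<gamma> t \<bullet> normal t)" "- (\<gamma> t \<bullet> normal t) \<le> M" "\<bar>\<gamma> t \<bullet> tangent t\<bar> \<le> M"
      using \<beta>(2)[of t] t Cauchy_Schwarz_ineq2[of "\<gamma> t" "normal t"] Cauchy_Schwarz_ineq2[of "\<gamma> t" "tangent t"]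
        M(2)[OF gamma_in_closure[of t]] by (auto simp: B'_def)
    have "frame_rect ((1 - s) *\<^sub>R \<gamma> t) t (2*a) (2*b) \<subseteq> closure \<Omega>"
      using frame_rect_under_parabola[OF LM(3)[OF t] LM(2) s(1) _ g sMa a5 ab(3)] \<beta>(1)
      by (simp add: b_def B'_def mult.commute)
    then have "4 * a * b \<le> measure lebesgue (central_section \<Omega> ((1 - s) *\<^sub>R \<gamma> t))"
      using ab by (intro measure_frame_rect_le_central_section frame_rect_in_Omega) auto
    moreover have "4 * a * b = B' * sqrt (B' / (32 * K2)) * (s * sqrt s)"
      using s \<beta>(1) LM(2) by (simp add: a_def b_def B'_def real_sqrt_mult real_sqrt_divide algebra_simps)
    ultimately show "B' * sqrt (B' / (32 * K2)) * (s * sqrt s)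
        \<le> measure lebesgue (central_section \<Omega> ((1 - s) *\<^sub>R \<gamma> t))" by simp
  qed
qed

lemma measure_central_section_far:
  obtains C2 where "C2 > 0" "\<And>t s. 0 < s \<Longrightarrow> s \<le> 1 \<Longrightarrow>
     C2 * s^2 \<le> measure lebesgue (central_section \<Omega> ((1 - s) *\<^sub>R \<gamma> t))"
proof -
  obtain \<beta> where \<beta>: "\<beta> > 0" "ball 0 \<beta> \<subseteq> \<Omega>" using open_\<Omega> zero_in open_contains_ball by blast
  show ?thesis
  proof (rule that[of "\<beta>^2/4"])
    show "\<beta>^2/4 > 0" using \<beta>(1) by simp
    fix t s :: real assume s: "0 < s" "s \<le> 1"
    define a where "a = s * \<beta> / 4"
    have "frame_rect ((1 - s) *\<^sub>R \<gamma> t) t a a \<subseteq> ball ((1 - s) *\<^sub>R \<gamma> t) (s * \<beta>)"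
    proof
      fix y assume "y \<in> frame_rect ((1 - s) *\<^sub>R \<gamma> t) t a a"
      then show "y \<in> ball ((1 - s) *\<^sub>R \<gamma> t) (s * \<beta>)"
        using norm_le_frame_coords[of "y - (1 - s) *\<^sub>R \<gamma> t" t] mult_pos_pos[OF s(1) \<beta>(1)]
        by (auto simp: frame_rect_def a_def dist_norm norm_minus_commute)
    qed
    also have "\<dots> \<subseteq> \<Omega>"
      by (rule convex_shrink_ball_subset[OF conv open_\<Omega> gamma_in_closure s \<beta>(2)])
    finally have "4 * a * a \<le> measure lebesgue (central_section \<Omega> ((1 - s) *\<^sub>R \<gamma> t))"
      using s \<beta>(1) by (intro measure_frame_rect_le_central_section) (auto simp: a_def)
    then show "\<beta>^2/4 * s^2 \<le> measure lebesgue (central_section \<Omega> ((1 - s) *\<^sub>R \<gamma> t))"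
      by (simp add: a_def power2_eq_square algebra_simps)
  qed
qed

lemma measure_central_section_lower:
  obtains CL where "CL > 0" "\<And>t s. t \<in> {0..1} \<Longrightarrow> 0 < s \<Longrightarrow> s \<le> 1 \<Longrightarrow>
     CL * (s * sqrt s) \<le> measure lebesgue (central_section \<Omega> ((1 - s) *\<^sub>R \<gamma> t))"
proof -
  obtain C1 s1 where near: "C1 > 0" "s1 > 0" "\<And>t s. t \<in> {0..1} \<Longrightarrow> 0 < s \<Longrightarrow> s \<le> s1 \<Longrightarrow>
     C1 * (s * sqrt s) \<le> measure lebesgue (central_section \<Omega> ((1 - s) *\<^sub>R \<gamma> t))"
    using measure_central_section_near by metis
  obtain C2 where far: "C2 > 0" "\<And>t s. 0 < s \<Longrightarrow> s \<le> 1 \<Longrightarrow>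
     C2 * s^2 \<le> measure lebesgue (central_section \<Omega> ((1 - s) *\<^sub>R \<gamma> t))"
    using measure_central_section_far by metis
  show ?thesis
  proof (rule that[of "min C1 (C2 * sqrt s1)"])
    show "min C1 (C2 * sqrt s1) > 0" using near far by simp
    fix t s :: real assume t: "t \<in> {0..1}" and s: "0 < s" "s \<le> 1"
    show "min C1 (C2 * sqrt s1) * (s * sqrt s) \<le> measure lebesgue (central_section \<Omega> ((1 - s) *\<^sub>R \<gamma> t))"
    proof (cases "s \<le> s1")
      case True
      then show ?thesis
        using near(3)[OF t s(1) True] s by (smt (verit) min.cobounded1 mult_right_mono zero_le_mult_iff real_sqrt_ge_zero)
    next
      case False
      have "min C1 (C2 * sqrt s1) * (s * sqrt s) \<le> (C2 * sqrt s) * (s * sqrt s)"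
        using False s far(1) by (intro mult_right_mono) (auto intro: min.coboundedI2)
      also have "\<dots> = C2 * s^2" using s by (simp add: power2_eq_square algebra_simps)
      finally show ?thesis using far(2)[of s t, OF s] by linarith
    qed
  qed
qed

lemma omega_half_set_three_halves:
  "\<exists>c C. c > 0 \<and> C > 0 \<and>
    (\<forall>r t. 0 \<le> r \<and> r < 1 \<and> 0 \<le> t \<and> t < 1 \<longrightarrow>
       c * (1 - r) powr (3/2) \<le> omega (half_set \<Omega>) (r *\<^sub>R \<gamma> t) \<and>
       omega (half_set \<Omega>) (r *\<^sub>R \<gamma> t) \<le> C * (1 - r) powr (3/2))"
proof -
  obtain CU where CU: "CU > 0" "\<And>t s. t \<in> {0..1} \<Longrightarrow> 0 < s \<Longrightarrow> s \<le> 1 \<Longrightarrow>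
      measure lebesgue (central_section \<Omega> ((1 - s) *\<^sub>R \<gamma> t)) \<le> CU * (s * sqrt s)"
    using measure_central_section_upper by metis
  obtain CL where CL: "CL > 0" "\<And>t s. t \<in> {0..1} \<Longrightarrow> 0 < s \<Longrightarrow> s \<le> 1 \<Longrightarrow>
      CL * (s * sqrt s) \<le> measure lebesgue (central_section \<Omega> ((1 - s) *\<^sub>R \<gamma> t))"
    using measure_central_section_lower by metis
  define S where "S = (SUP y. covariogram (half_set \<Omega>) y)"
  have "bdd_above (range (covariogram (half_set \<Omega>)))"
    using measure_central_section_le[OF open_\<Omega> bdd]
    by (intro bdd_aboveI2[where M = "measure lebesgue \<Omega> / 4"]) (simp add: covariogram_half_set)
  then have "covariogram (half_set \<Omega>) 0 \<le> S" unfolding S_def by (rule cSUP_upper2) auto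
  moreover have "CL / 4 \<le> covariogram (half_set \<Omega>) 0"
    using CL(2)[of 0 1] by (simp add: covariogram_half_set)
  ultimately have S: "S > 0" using CL(1) by linarith
  show ?thesis
  proof (intro exI conjI allI impI)
    show "CL / (4 * S) > 0" "CU / (4 * S) > 0" using CL(1) CU(1) S by simp_all
    fix r t :: real assume rt: "0 \<le> r \<and> r < 1 \<and> 0 \<le> t \<and> t < 1"
    then have t: "t \<in> {0..1}" and s: "0 < 1 - r" "1 - r \<le> 1" by auto
    have om: "omega (half_set \<Omega>) (r *\<^sub>R \<gamma> t)
        = measure lebesgue (central_section \<Omega> ((1 - (1 - r)) *\<^sub>R \<gamma> t)) / (4 * S)"
      by (simp add: omega_def covariogram_half_set S_def)
    show "CL / (4 * S) * (1 - r) powr (3/2) \<le> omega (half_set \<Omega>) (r *\<^sub>R \<gamma> t)"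
      unfolding om powr_three_halves[OF less_imp_le[OF s(1)]]
      using CL(2)[OF t s] S by (simp add: divide_right_mono)
    show "omega (half_set \<Omega>) (r *\<^sub>R \<gamma> t) \<le> CU / (4 * S) * (1 - r) powr (3/2)"
      unfolding om powr_three_halves[OF less_imp_le[OF s(1)]]
      using CU(2)[OF t s] S by (simp add: divide_right_mono)
  qed
qed

end

theorem mainTheorem19:
  fixes \<Omega> :: "(real^2) set" and \<gamma> :: "real \<Rightarrow> real^2"
  assumes open_\<Omega>: "open \<Omega>" and conv: "convex \<Omega>" and bdd: "bounded \<Omega>"
    and zero_in: "0 \<in> \<Omega>" and omega0: "omega \<Omega> 0 = 1"
    and periodic: "\<And>t. \<gamma> (t + 1) = \<gamma> t"
    and inj: "inj_on \<gamma> {0..<1}"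
    and image: "\<gamma> ` {0..1} = frontier \<Omega>"
    and diff1: "\<And>t. \<gamma> differentiable (at t)"
    and diff2: "\<And>t. (\<lambda>s. vector_derivative \<gamma> (at s)) differentiable (at t)"
    and cont2: "continuous_on UNIV
       (\<lambda>t. vector_derivative (\<lambda>s. vector_derivative \<gamma> (at s)) (at t))"
    and arclen: "\<And>t. norm (vector_derivative \<gamma> (at t)) = 1"
    and curv: "\<And>t. norm (vector_derivative (\<lambda>s. vector_derivative \<gamma> (at s)) (at t)) > 0"
  shows "\<exists>c C. c > 0 \<and> C > 0 \<and>
    (\<forall>r t. 0 \<le> r \<and> r < 1 \<and> 0 \<le> t \<and> t < 1 \<longrightarrow>
       c * (1 - r) powr (3/2) \<le> omega (half_set \<Omega>) (r *\<^sub>R \<gamma> t) \<and>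
       omega (half_set \<Omega>) (r *\<^sub>R \<gamma> t) \<le> C * (1 - r) powr (3/2))"
proof -
  interpret smooth_strictly_convex_domain \<Omega> \<gamma>
    using open_\<Omega> conv bdd zero_in periodic inj image diff1 diff2 cont2 arclen curv
    by unfold_locales
  show ?thesis by (rule omega_half_set_three_halves)
qed

end
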